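(* For a finite-space SSP game (as in the context) satisfying the Finite-Space SSP Game Model Assumption, the equation $Q=FQ$ has a unique solution $Q^*\in\mathbb{R}^{R}$, which is related to the value function $J^*$ of the game by $Q^*(i,u,v)=g(i,u,v)+\sum_{j\in S}p_{ij}(u,v)J^*(j)$ for all $(i,u,v)\in R$, and $J^*(i)=\inf_{\rho\in\bar U(i)}\sup_{\sigma\in\bar V(i)}\underline{Q}^*(i,\rho,\sigma)$ for all $i\in S$. Any stationary randomized policies $\mu^*\in\Pi_{1,SR}$, $\nu^*\in\Pi_{2,SR}$ such that for every $i\in S$, $\mu^*(\cdot\mid i)\in\arg\min_{\rho\in\bar U(i)}\sup_{\sigma\in\bar V(i)}\underline Q^*(i,\rho,\sigma)$ and $\nu^*(\cdot\mid i)\in\arg\max_{\sigma\in\bar V(i)}\inf_{\rho\in\bar U(i)}\underline Q^*(i,\rho,\sigma)$ are optimal policies for players I and II, respectively.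
   Context: Finite-space game: $S=\{1,\dots,n\}$, $S_o=S\cup\{0\}$, $0$ absorbing cost-free termination state. At $i\in S$, players I and II have finite control sets $U(i)$, $V(i)$; under $(u,v)$ the state moves to $j\in S_o$ w.p. $p_{ij}(u,v)$ with transition cost $\hat g(i,u,v,j)$ paid by player I to player II; $g(i,u,v)$ is the expected one-stage cost. $\Pi_1,\Pi_2$: history-dependent randomized policies. $J(i;\pi_1,\pi_2)=\liminf_{t\to\infty}E_{\pi_1\pi_2}[\sum_{k=0}^t\hat g(i_k,u_k,v_k,i_{k+1})\mid i_0=i]$. The value function $J^*$ is $J^*(i)=\inf_{\pi_1}\sup_{\pi_2}J(i;\pi_1,\pi_2)=\sup_{\pi_2}\inf_{\pi_1}J(i;\pi_1,\pi_2)$; a policy is optimal for player I (II) if it attains the outer inf (sup) for every $i$. $\bar U(i)=\mathcal P(U(i))$, $\bar V(i)=\mathcal P(V(i))$; $\Pi_{1,SR},\Pi_{2,SR}$: stationary randomized policies. $R=\{(i,u,v): i\in S,u\in U(i),v\in V(i)\}$. For $Q\in\mathbb{R}^R$, $i\in S$, $\rho\in\bar U(i)$, $\sigma\in\bar V(i)$: $\underline Q(i,\rho,\sigma)=\sum_{u\in U(i)}\sum_{v\in V(i)}\rho(u)\sigma(v)Q(i,u,v)$. $F:\mathbb{R}^R\to\mathbb{R}^R$, $(FQ)(i,u,v)=g(i,u,v)+\sum_{j\in S}p_{ij}(u,v)\inf_{\rho\in\bar U(j)}\sup_{\sigma\in\bar V(j)}\underline Q(j,\rho,\sigma)$. A pair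 of policies is prolonging if for some initial state the termination state is with positive probability never reached. Finite-Space SSP Game Model Assumption: (i) there is $\bar\mu\in\Pi_{1,SR}$ with $J(i;\bar\mu,\nu)<+\infty$ for all $\nu\in\Pi_{2,SR}$, all $i$; (ii) there is $\bar\nu\in\Pi_{2,SR}$ with $J(i;\mu,\bar\nu)>-\infty$ for all $\mu\in\Pi_{1,SR}$, all $i$; (iii) every prolonging pair in $\Pi_{1,SR}\times\Pi_{2,SR}$ has $J(i;\mu,\nu)\in\{+\infty,-\infty\}$ for some $i$. *)

theory Defs
  imports "HOL-Probability.Probability"
begin

text \<open>Finite-space SSP game. States S = {1..n}, termination state 0.
  Control sets U i, V i; transition probabilities p i j u v (j in {0..n});
  transition costs gh i u v j paid by player I to player II.\<close>

definition states :: "nat \<Rightarrow> nat set" where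
  "states n = {1..n}"

definition game_model ::
  "nat \<Rightarrow> (nat \<Rightarrow> 'u set) \<Rightarrow> (nat \<Rightarrow> 'v set) \<Rightarrow> (nat \<Rightarrow> nat \<Rightarrow> 'u \<Rightarrow> 'v \<Rightarrow> real) \<Rightarrow> bool" where
  "game_model n U V p \<longleftrightarrow>
     (\<forall>i\<in>states n. finite (U i) \<and> U i \<noteq> {} \<and> finite (V i) \<and> V i \<noteq> {}) \<and>
     (\<forall>i\<in>states n. \<forall>u\<in>U i. \<forall>v\<in>V i.
        (\<forall>j\<in>{0..n}. 0 \<le> p i j u v) \<and> (\<Sum>j\<in>{0..n}. p i j u v) = 1)"

definition gexp ::
  "nat \<Rightarrow> (nat \<Rightarrow> nat \<Rightarrow> 'u \<Rightarrow> 'v \<Rightarrow> real) \<Rightarrow> (nat \<Rightarrow> 'u \<Rightarrow> 'v \<Rightarrow> nat \<Rightarrow> real)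
   \<Rightarrow> nat \<Rightarrow> 'u \<Rightarrow> 'v \<Rightarrow> real" where
  "gexp n p gh i u v = (\<Sum>j\<in>{0..n}. p i j u v * gh i u v j)"

text \<open>Histories: initial state and list of (u_k, v_k, i_{k+1}).\<close>
type_synonym ('u, 'v) hist = "nat \<times> ('u \<times> 'v \<times> nat) list"

definition cur :: "('u, 'v) hist \<Rightarrow> nat" where
  "cur h = (if snd h = [] then fst h else snd (snd (last (snd h))))"

definition hext :: "('u, 'v) hist \<Rightarrow> 'u \<Rightarrow> 'v \<Rightarrow> nat \<Rightarrow> ('u, 'v) hist" where
  "hext h u v j = (fst h, snd h @ [(u, v, j)])"

definition Pi1 :: "nat \<Rightarrow> (nat \<Rightarrow> 'u set) \<Rightarrow> (('u, 'v) hist \<Rightarrow> 'u pmf) set" where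
  "Pi1 n U = {\<pi>. \<forall>h. cur h \<in> states n \<longrightarrow> set_pmf (\<pi> h) \<subseteq> U (cur h)}"

definition Pi2 :: "nat \<Rightarrow> (nat \<Rightarrow> 'v set) \<Rightarrow> (('u, 'v) hist \<Rightarrow> 'v pmf) set" where
  "Pi2 n V = {\<pi>. \<forall>h. cur h \<in> states n \<longrightarrow> set_pmf (\<pi> h) \<subseteq> V (cur h)}"

definition SR :: "nat \<Rightarrow> (nat \<Rightarrow> 'a set) \<Rightarrow> (nat \<Rightarrow> 'a pmf) set" where
  "SR n W = {\<mu>. \<forall>i\<in>states n. set_pmf (\<mu> i) \<subseteq> W i}"

definition stat :: "(nat \<Rightarrow> 'a pmf) \<Rightarrow> ('u, 'v) hist \<Rightarrow> 'a pmf" where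
  "stat \<mu> = (\<lambda>h. \<mu> (cur h))"

text \<open>ecost ... m h: expected total cost of the next m stages, given current history h
  (state 0 is absorbing and cost-free).\<close>
fun ecost ::
  "nat \<Rightarrow> (nat \<Rightarrow> 'u set) \<Rightarrow> (nat \<Rightarrow> 'v set) \<Rightarrow> (nat \<Rightarrow> nat \<Rightarrow> 'u \<Rightarrow> 'v \<Rightarrow> real)
   \<Rightarrow> (nat \<Rightarrow> 'u \<Rightarrow> 'v \<Rightarrow> nat \<Rightarrow> real)
   \<Rightarrow> (('u, 'v) hist \<Rightarrow> 'u pmf) \<Rightarrow> (('u, 'v) hist \<Rightarrow> 'v pmf) \<Rightarrow> nat \<Rightarrow> ('u, 'v) hist \<Rightarrow> real" where
  "ecost n U V p gh \<pi>1 \<pi>2 0 h = 0"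
| "ecost n U V p gh \<pi>1 \<pi>2 (Suc m) h =
     (if cur h \<in> states n then
        (\<Sum>u\<in>U (cur h). \<Sum>v\<in>V (cur h). pmf (\<pi>1 h) u * pmf (\<pi>2 h) v *
           (\<Sum>j\<in>{0..n}. p (cur h) j u v *
              (gh (cur h) u v j + ecost n U V p gh \<pi>1 \<pi>2 m (hext h u v j))))
      else 0)"

text \<open>survp ... m h: probability that the state is still in S after m more stages.\<close>
fun survp ::
  "nat \<Rightarrow> (nat \<Rightarrow> 'u set) \<Rightarrow> (nat \<Rightarrow> 'v set) \<Rightarrow> (nat \<Rightarrow> nat \<Rightarrow> 'u \<Rightarrow> 'v \<Rightarrow> real)
   \<Rightarrow> (('u, 'v) hist \<Rightarrow> 'u pmf) \<Rightarrow> (('u, 'v) hist \<Rightarrow> 'v pmf) \<Rightarrow> nat \<Rightarrow> ('u, 'v) hist \<Rightarrow> real" where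
  "survp n U V p \<pi>1 \<pi>2 0 h = (if cur h \<in> states n then 1 else 0)"
| "survp n U V p \<pi>1 \<pi>2 (Suc m) h =
     (if cur h \<in> states n then
        (\<Sum>u\<in>U (cur h). \<Sum>v\<in>V (cur h). pmf (\<pi>1 h) u * pmf (\<pi>2 h) v *
           (\<Sum>j\<in>{0..n}. p (cur h) j u v * survp n U V p \<pi>1 \<pi>2 m (hext h u v j)))
      else 0)"

text \<open>J(i; pi1, pi2) = liminf_t E[sum_{k=0}^t gh(i_k,u_k,v_k,i_{k+1}) | i_0 = i].\<close>
definition Jcost ::
  "nat \<Rightarrow> (nat \<Rightarrow> 'u set) \<Rightarrow> (nat \<Rightarrow> 'v set) \<Rightarrow> (nat \<Rightarrow> nat \<Rightarrow> 'u \<Rightarrow> 'v \<Rightarrow> real)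
   \<Rightarrow> (nat \<Rightarrow> 'u \<Rightarrow> 'v \<Rightarrow> nat \<Rightarrow> real)
   \<Rightarrow> nat \<Rightarrow> (('u, 'v) hist \<Rightarrow> 'u pmf) \<Rightarrow> (('u, 'v) hist \<Rightarrow> 'v pmf) \<Rightarrow> ereal" where
  "Jcost n U V p gh i \<pi>1 \<pi>2 =
     liminf (\<lambda>t. ereal (ecost n U V p gh \<pi>1 \<pi>2 (Suc t) (i, [])))"

definition Jstar ::
  "nat \<Rightarrow> (nat \<Rightarrow> 'u set) \<Rightarrow> (nat \<Rightarrow> 'v set) \<Rightarrow> (nat \<Rightarrow> nat \<Rightarrow> 'u \<Rightarrow> 'v \<Rightarrow> real)
   \<Rightarrow> (nat \<Rightarrow> 'u \<Rightarrow> 'v \<Rightarrow> nat \<Rightarrow> real) \<Rightarrow> nat \<Rightarrow> ereal" where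
  "Jstar n U V p gh i =
     (INF \<pi>1\<in>Pi1 n U. SUP \<pi>2\<in>(Pi2 n V :: (('u, 'v) hist \<Rightarrow> 'v pmf) set). Jcost n U V p gh i \<pi>1 \<pi>2)"

definition Jlower ::
  "nat \<Rightarrow> (nat \<Rightarrow> 'u set) \<Rightarrow> (nat \<Rightarrow> 'v set) \<Rightarrow> (nat \<Rightarrow> nat \<Rightarrow> 'u \<Rightarrow> 'v \<Rightarrow> real)
   \<Rightarrow> (nat \<Rightarrow> 'u \<Rightarrow> 'v \<Rightarrow> nat \<Rightarrow> real) \<Rightarrow> nat \<Rightarrow> ereal" where
  "Jlower n U V p gh i =
     (SUP \<pi>2\<in>Pi2 n V. INF \<pi>1\<in>(Pi1 n U :: (('u, 'v) hist \<Rightarrow> 'u pmf) set). Jcost n U V p gh i \<pi>1 \<pi>2)"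

definition optimal_I ::
  "nat \<Rightarrow> (nat \<Rightarrow> 'u set) \<Rightarrow> (nat \<Rightarrow> 'v set) \<Rightarrow> (nat \<Rightarrow> nat \<Rightarrow> 'u \<Rightarrow> 'v \<Rightarrow> real)
   \<Rightarrow> (nat \<Rightarrow> 'u \<Rightarrow> 'v \<Rightarrow> nat \<Rightarrow> real) \<Rightarrow> (('u, 'v) hist \<Rightarrow> 'u pmf) \<Rightarrow> bool" where
  "optimal_I n U V p gh \<pi>1 \<longleftrightarrow> \<pi>1 \<in> Pi1 n U \<and>
     (\<forall>i\<in>states n. (SUP \<pi>2\<in>Pi2 n V. Jcost n U V p gh i \<pi>1 \<pi>2) = Jstar n U V p gh i)"

definition optimal_II ::
  "nat \<Rightarrow> (nat \<Rightarrow> 'u set) \<Rightarrow> (nat \<Rightarrow> 'v set) \<Rightarrow> (nat \<Rightarrow> nat \<Rightarrow> 'u \<Rightarrow> 'v \<Rightarrow> real)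
   \<Rightarrow> (nat \<Rightarrow> 'u \<Rightarrow> 'v \<Rightarrow> nat \<Rightarrow> real) \<Rightarrow> (('u, 'v) hist \<Rightarrow> 'v pmf) \<Rightarrow> bool" where
  "optimal_II n U V p gh \<pi>2 \<longleftrightarrow> \<pi>2 \<in> Pi2 n V \<and>
     (\<forall>i\<in>states n. (INF \<pi>1\<in>Pi1 n U. Jcost n U V p gh i \<pi>1 \<pi>2) = Jlower n U V p gh i)"

text \<open>Prolonging pair: for some initial state, with positive probability 0 is never reached,
  i.e. the probability of not having reached 0 by stage t stays bounded away from 0.\<close>
definition prolonging ::
  "nat \<Rightarrow> (nat \<Rightarrow> 'u set) \<Rightarrow> (nat \<Rightarrow> 'v set) \<Rightarrow> (nat \<Rightarrow> nat \<Rightarrow> 'u \<Rightarrow> 'v \<Rightarrow> real)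
   \<Rightarrow> (('u, 'v) hist \<Rightarrow> 'u pmf) \<Rightarrow> (('u, 'v) hist \<Rightarrow> 'v pmf) \<Rightarrow> bool" where
  "prolonging n U V p \<pi>1 \<pi>2 \<longleftrightarrow>
     (\<exists>i\<in>states n. \<exists>\<epsilon>>0. \<forall>t. \<epsilon> \<le> survp n U V p \<pi>1 \<pi>2 t (i, []))"

definition SSP_assumption ::
  "nat \<Rightarrow> (nat \<Rightarrow> 'u set) \<Rightarrow> (nat \<Rightarrow> 'v set) \<Rightarrow> (nat \<Rightarrow> nat \<Rightarrow> 'u \<Rightarrow> 'v \<Rightarrow> real)
   \<Rightarrow> (nat \<Rightarrow> 'u \<Rightarrow> 'v \<Rightarrow> nat \<Rightarrow> real) \<Rightarrow> bool" where
  "SSP_assumption n U V p gh \<longleftrightarrow>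
     (\<exists>\<mu>\<in>SR n U. \<forall>\<nu>\<in>SR n V. \<forall>i\<in>states n.
        Jcost n U V p gh i (stat \<mu>) (stat \<nu>) < \<infinity>) \<and>
     (\<exists>\<nu>\<in>SR n V. \<forall>\<mu>\<in>SR n U. \<forall>i\<in>states n.
        Jcost n U V p gh i (stat \<mu>) (stat \<nu>) > -\<infinity>) \<and>
     (\<forall>\<mu>\<in>SR n U. \<forall>\<nu>\<in>SR n V. prolonging n U V p (stat \<mu>) (stat \<nu>) \<longrightarrow>
        (\<exists>i\<in>states n. Jcost n U V p gh i (stat \<mu>) (stat \<nu>) \<in> {\<infinity>, -\<infinity>}))"

definition Rset :: "nat \<Rightarrow> (nat \<Rightarrow> 'u set) \<Rightarrow> (nat \<Rightarrow> 'v set) \<Rightarrow> (nat \<times> 'u \<times> 'v) set" where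
  "Rset n U V = {(i, u, v). i \<in> states n \<and> u \<in> U i \<and> v \<in> V i}"

definition Ubar :: "(nat \<Rightarrow> 'a set) \<Rightarrow> nat \<Rightarrow> 'a pmf set" where
  "Ubar W i = {\<rho>. set_pmf \<rho> \<subseteq> W i}"

definition Qbar ::
  "(nat \<Rightarrow> 'u set) \<Rightarrow> (nat \<Rightarrow> 'v set) \<Rightarrow> (nat \<times> 'u \<times> 'v \<Rightarrow> real) \<Rightarrow> nat \<Rightarrow> 'u pmf \<Rightarrow> 'v pmf \<Rightarrow> real" where
  "Qbar U V Q i \<rho> \<sigma> = (\<Sum>u\<in>U i. \<Sum>v\<in>V i. pmf \<rho> u * pmf \<sigma> v * Q (i, u, v))"

definition minimaxQ ::
  "(nat \<Rightarrow> 'u set) \<Rightarrow> (nat \<Rightarrow> 'v set) \<Rightarrow> (nat \<times> 'u \<times> 'v \<Rightarrow> real) \<Rightarrow> nat \<Rightarrow> real" where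
  "minimaxQ U V Q j = (INF \<rho>\<in>Ubar U j. SUP \<sigma>\<in>Ubar V j. Qbar U V Q j \<rho> \<sigma>)"

definition Fop ::
  "nat \<Rightarrow> (nat \<Rightarrow> 'u set) \<Rightarrow> (nat \<Rightarrow> 'v set) \<Rightarrow> (nat \<Rightarrow> nat \<Rightarrow> 'u \<Rightarrow> 'v \<Rightarrow> real)
   \<Rightarrow> (nat \<Rightarrow> 'u \<Rightarrow> 'v \<Rightarrow> nat \<Rightarrow> real) \<Rightarrow> (nat \<times> 'u \<times> 'v \<Rightarrow> real) \<Rightarrow> nat \<times> 'u \<times> 'v \<Rightarrow> real" where
  "Fop n U V p gh Q = (\<lambda>(i, u, v).
     gexp n p gh i u v + (\<Sum>j\<in>states n. p i j u v * minimaxQ U V Q j))"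

text \<open>Q solves Q = FQ as an element of R^R (functions extensional on R).\<close>
definition fixed_point ::
  "nat \<Rightarrow> (nat \<Rightarrow> 'u set) \<Rightarrow> (nat \<Rightarrow> 'v set) \<Rightarrow> (nat \<Rightarrow> nat \<Rightarrow> 'u \<Rightarrow> 'v \<Rightarrow> real)
   \<Rightarrow> (nat \<Rightarrow> 'u \<Rightarrow> 'v \<Rightarrow> nat \<Rightarrow> real) \<Rightarrow> (nat \<times> 'u \<times> 'v \<Rightarrow> real) \<Rightarrow> bool" where
  "fixed_point n U V p gh Q \<longleftrightarrow> Q \<in> extensional (Rset n U V) \<and>
     (\<forall>x\<in>Rset n U V. Q x = Fop n U V p gh Q x)"

end

theory Submission
  imports Defs
begin

text \<open>For \<open>X\<close> on the states let \<open>T_game X i\<close> be the value of the matrix game at \<open>i\<close> with payoff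
  \<open>g + P X\<close> (it exists by von Neumann's minimax theorem, proved below from Ville's theorem of the
  alternative), and let \<open>T_I \<mu>\<close>, \<open>T_II \<nu>\<close> be the operators obtained when one player is held
  to a stationary policy. A comparison principle drives everything: along a terminating pair
  of policies the expected costs are squeezed between subsolutions and supersolutions, because
  the survival probability tends to zero.

  Under the SSP assumption the pair \<open>(\<mu>, \<nu>)\<close> of parts (i) and (ii) terminates, and policy
  iteration for the opponent yields a supersolution of \<open>T_I \<mu>\<close> and a subsolution of
  \<open>T_II \<nu>\<close>. Value iteration for \<open>T_game\<close> started at the former decreases, stays above the
  latter, and converges to a fixed point \<open>J\<close>. A stationary policy attaining \<open>T_game J\<close> for
  player I then guarantees cost at most \<open>J\<close> against every history-dependent opponent, and
  symmetrically (by exchanging the players) for player II, so \<open>J\<close> is both the upper and the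
  lower value. Fixed points of \<open>F\<close> and of \<open>T_game\<close> correspond via \<open>Q \<mapsto> minimaxQ Q\<close> and
  \<open>J \<mapsto> g + P J\<close>, which gives existence, uniqueness and the optimal policies.\<close>

section \<open>Finite matrix games\<close>

definition prob_simplex :: "'a set \<Rightarrow> ('a \<Rightarrow> real) set" where
  "prob_simplex A = {f. (\<forall>x. 0 \<le> f x) \<and> (\<forall>x. x \<notin> A \<longrightarrow> f x = 0) \<and> sum f A = 1}"

lemma prob_simplex_nonneg: "f \<in> prob_simplex A \<Longrightarrow> 0 \<le> f x"
  and prob_simplex_sum: "f \<in> prob_simplex A \<Longrightarrow> sum f A = 1"
  by (auto simp: prob_simplex_def)

lemma prob_simplex_le_1: "f \<in> prob_simplex A \<Longrightarrow> finite A \<Longrightarrow> f x \<le> 1"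
  unfolding prob_simplex_def by (cases "x \<in> A") (auto, metis member_le_sum)

lemma pmf_in_prob_simplex:
  assumes "finite A" "set_pmf \<rho> \<subseteq> A" shows "pmf \<rho> \<in> prob_simplex A"
  using assms sum_pmf_eq_1[OF assms] by (auto simp: prob_simplex_def set_pmf_iff pmf_nonneg)

lemma prob_simplex_is_pmf:
  assumes A: "finite A" and f: "f \<in> prob_simplex A"
  obtains \<rho> where "set_pmf \<rho> \<subseteq> A" "pmf \<rho> = f"
proof -
  have nn: "\<And>x. 0 \<le> f x" and z: "\<And>x. x \<notin> A \<Longrightarrow> f x = 0" and s: "sum f A = 1"
    using f by (auto simp: prob_simplex_def)
  have "(\<integral>\<^sup>+x. ennreal (f x) \<partial>count_space UNIV) = (\<Sum>x\<in>A. ennreal (f x))"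
    by (rule nn_integral_count_space') (use A z in auto)
  also have "\<dots> = 1" using nn s by (simp add: sum_ennreal)
  finally have prob: "(\<integral>\<^sup>+x. ennreal (f x) \<partial>count_space UNIV) = 1" .
  show ?thesis
    using that[of "embed_pmf f"] pmf_embed_pmf[OF nn prob] set_embed_pmf[OF nn prob] z by auto
qed

lemma convergent_subseq_finite_family:
  fixes f :: "nat \<Rightarrow> 'a \<Rightarrow> real"
  assumes "finite A" and "\<And>k x. x \<in> A \<Longrightarrow> \<bar>f k x\<bar> \<le> B"
  shows "\<exists>r. strict_mono r \<and> (\<forall>x\<in>A. convergent (\<lambda>k. f (r k) x))"
  using assms
proof (induction A rule: finite_induct)
  case empty
  then show ?case by (auto intro: exI[of _ id] simp: strict_mono_def)
next
  case (insert a A)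
  then obtain r where r: "strict_mono r" "\<forall>x\<in>A. convergent (\<lambda>k. f (r k) x)" by auto
  obtain s where s: "strict_mono s" "monoseq (\<lambda>k. f (r (s k)) a)"
    using seq_monosub[of "\<lambda>k. f (r k) a"] by auto
  have "Bseq (\<lambda>k. f (r (s k)) a)"
    by (rule BseqI'[of _ B]) (use insert.prems in auto)
  hence "convergent (\<lambda>k. f (r (s k)) a)" using s Bseq_monoseq_convergent by blast
  moreover have "\<forall>x\<in>A. convergent (\<lambda>k. f (r (s k)) x)"
    using convergent_subseq_convergent[OF _ s(1)] r(2) by (auto simp: o_def)
  moreover have "strict_mono (r \<circ> s)" using r(1) s(1) by (rule strict_mono_o)
  ultimately show ?case by (intro exI[of _ "r \<circ> s"]) (auto simp: o_def)
qed

lemma prob_simplex_seq_compact: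
  fixes f :: "nat \<Rightarrow> 'a \<Rightarrow> real"
  assumes A: "finite A" and f: "\<And>k. f k \<in> prob_simplex A"
  obtains r g where "strict_mono r" "g \<in> prob_simplex A"
    "\<And>x. x \<in> A \<Longrightarrow> (\<lambda>k. f (r k) x) \<longlonglongrightarrow> g x"
proof -
  have "\<And>k x. x \<in> A \<Longrightarrow> \<bar>f k x\<bar> \<le> 1"
    using f prob_simplex_nonneg prob_simplex_le_1[OF _ A] by (metis abs_of_nonneg)
  then obtain r where r: "strict_mono r" "\<forall>x\<in>A. convergent (\<lambda>k. f (r k) x)"
    using convergent_subseq_finite_family[OF A, of f 1] by blast
  define g where "g = (\<lambda>x. if x \<in> A then lim (\<lambda>k. f (r k) x) else 0)"
  have lim: "(\<lambda>k. f (r k) x) \<longlonglongrightarrow> g x" if "x \<in> A" for x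
    using r(2) that by (simp add: g_def convergent_LIMSEQ_iff)
  have nonneg: "0 \<le> g x" for x
  proof (cases "x \<in> A")
    case True
    show ?thesis by (rule LIMSEQ_le_const[OF lim[OF True]]) (use prob_simplex_nonneg[OF f] in auto)
  qed (simp add: g_def)
  have "(\<lambda>k. sum (f (r k)) A) \<longlonglongrightarrow> sum g A"
    by (rule tendsto_sum) (use lim in auto)
  moreover have "(\<lambda>k. sum (f (r k)) A) = (\<lambda>k. 1)" using f prob_simplex_sum by auto
  ultimately have "sum g A = 1" using LIMSEQ_unique tendsto_const by metis
  hence "g \<in> prob_simplex A" using nonneg by (auto simp: prob_simplex_def g_def)
  with r(1) lim show ?thesis using that by blast
qed

lemma prob_simplex_attains_min:
  fixes F :: "('a \<Rightarrow> real) \<Rightarrow> real"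
  assumes A: "finite A" "A \<noteq> {}" and L0: "0 \<le> L"
    and L: "\<And>f g. f \<in> prob_simplex A \<Longrightarrow> g \<in> prob_simplex A \<Longrightarrow> F f \<le> F g + L * (\<Sum>x\<in>A. \<bar>f x - g x\<bar>)"
  shows "\<exists>f\<in>prob_simplex A. \<forall>g\<in>prob_simplex A. F f \<le> F g"
proof -
  obtain a where a: "a \<in> A" using A by auto
  define f0 where "f0 = (\<lambda>x. if x = a then 1 else (0::real))"
  have f0: "f0 \<in> prob_simplex A" using A a by (auto simp: prob_simplex_def f0_def)
  have "F f0 - L * 2 \<le> F g" if g: "g \<in> prob_simplex A" for g
  proof -
    have "(\<Sum>x\<in>A. \<bar>f0 x - g x\<bar>) \<le> (\<Sum>x\<in>A. f0 x + g x)"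
      by (rule sum_mono) (use prob_simplex_nonneg[OF f0] prob_simplex_nonneg[OF g] in \<open>auto simp: abs_le_iff\<close>)
    also have "\<dots> = 2" using prob_simplex_sum[OF f0] prob_simplex_sum[OF g] by (simp add: sum.distrib)
    finally have "L * (\<Sum>x\<in>A. \<bar>f0 x - g x\<bar>) \<le> L * 2" using L0 by (rule mult_left_mono)
    thus ?thesis using L[OF f0 g] by linarith
  qed
  hence bdd: "bdd_below (F ` prob_simplex A)" by (auto intro!: bdd_belowI)
  define d where "d = (INF g\<in>prob_simplex A. F g)"
  have d_le: "\<And>g. g \<in> prob_simplex A \<Longrightarrow> d \<le> F g" unfolding d_def using bdd by (rule cINF_lower)
  have "\<exists>g\<in>prob_simplex A. F g < d + inverse (real (Suc k))" for k
  proof -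
    have "d < d + inverse (real (Suc k))" by simp
    then show ?thesis unfolding d_def using cINF_less_iff[OF _ bdd] f0 by blast
  qed
  then obtain f where f: "\<And>k. f k \<in> prob_simplex A" "\<And>k. F (f k) < d + inverse (real (Suc k))"
    by metis
  obtain r g where r: "strict_mono r" and g: "g \<in> prob_simplex A"
    and lim: "\<And>x. x \<in> A \<Longrightarrow> (\<lambda>k. f (r k) x) \<longlonglongrightarrow> g x"
    using prob_simplex_seq_compact[of A f, OF A(1) f(1)] by blast
  define D where "D = (\<lambda>k. \<Sum>x\<in>A. \<bar>g x - f (r k) x\<bar>)"
  have "D \<longlonglongrightarrow> (\<Sum>x\<in>A. \<bar>g x - g x\<bar>)" unfolding D_def
    by (intro tendsto_sum tendsto_rabs tendsto_diff tendsto_const lim)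
  hence upper: "(\<lambda>k. d + inverse (real (Suc k)) + L * D k) \<longlonglongrightarrow> d + 0 + L * 0"
    by (intro tendsto_add tendsto_const tendsto_mult LIMSEQ_inverse_real_of_nat) simp
  have "F g \<le> d + inverse (real (Suc k)) + L * D k" for k
  proof -
    have "F g \<le> F (f (r k)) + L * D k" unfolding D_def using L[OF g f(1)] .
    moreover have "inverse (real (Suc (r k))) \<le> inverse (real (Suc k))"
      using seq_suble[OF r, of k] by (simp add: le_imp_inverse_le)
    ultimately show ?thesis using f(2)[of "r k"] by linarith
  qed
  hence "F g \<le> d + 0 + L * 0" by (intro LIMSEQ_le_const[OF upper]) auto
  thus ?thesis using g d_le by force
qed

text \<open>Ville's theorem of the alternative, proved by least squares: a minimiser of the squared
  shortfall of the column mixture is either feasible, or its first-order optimality condition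
  makes the normalised shortfall a strictly separating row mixture.\<close>

definition shortfall :: "'a set \<Rightarrow> 'b set \<Rightarrow> ('a \<Rightarrow> 'b \<Rightarrow> real) \<Rightarrow> ('b \<Rightarrow> real) \<Rightarrow> real" where
  "shortfall A B a g = (\<Sum>x\<in>A. (min 0 (\<Sum>y\<in>B. g y * a x y))\<^sup>2)"

lemma min0_sq_add_le: "(min 0 (s + d))\<^sup>2 \<le> (min 0 s)\<^sup>2 + 2 * min 0 s * d + d\<^sup>2" for s d :: real
proof (cases "s \<le> 0"; cases "s + d \<le> 0")
  assume "s \<le> 0" "\<not> s + d \<le> 0"
  hence "0 \<le> (s+d)\<^sup>2" by simp
  thus ?thesis using \<open>s \<le> 0\<close> \<open>\<not> s + d \<le> 0\<close> by (simp add: min_def power2_eq_square algebra_simps)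
next
  assume "\<not> s \<le> 0" "s + d \<le> 0"
  hence "-(s+d) \<le> -d" "0 \<le> -(s+d)" by auto
  hence "(-(s+d)) * (-(s+d)) \<le> (-d) * (-d)" by (intro mult_mono) auto
  thus ?thesis using \<open>\<not> s \<le> 0\<close> \<open>s + d \<le> 0\<close> by (simp add: min_def power2_eq_square algebra_simps)
qed (auto simp: min_def power2_eq_square algebra_simps)

lemma min0_sq_diff_le: "\<bar>(min 0 s)\<^sup>2 - (min 0 t)\<^sup>2\<bar> \<le> \<bar>s - t\<bar> * (\<bar>s\<bar> + \<bar>t\<bar>)" for s t :: real
proof -
  have "\<bar>(min 0 s)\<^sup>2 - (min 0 t)\<^sup>2\<bar> = \<bar>min 0 s - min 0 t\<bar> * \<bar>min 0 s + min 0 t\<bar>"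
    unfolding power2_eq_square square_diff_square_factored abs_mult[symmetric] by (simp add: mult.commute)
  also have "\<dots> \<le> \<bar>s - t\<bar> * (\<bar>s\<bar> + \<bar>t\<bar>)"
    by (rule mult_mono) (auto simp: min_def abs_if)
  finally show ?thesis .
qed

lemma abs_le_sum_sum_abs:
  fixes a :: "'a \<Rightarrow> 'b \<Rightarrow> real"
  assumes "finite A" "finite B" "x \<in> A" "y \<in> B"
  shows "\<bar>a x y\<bar> \<le> (\<Sum>x\<in>A. \<Sum>y\<in>B. \<bar>a x y\<bar>)"
proof -
  have "\<bar>a x y\<bar> \<le> (\<Sum>y\<in>B. \<bar>a x y\<bar>)" using assms by (intro member_le_sum) auto
  also have "\<dots> \<le> (\<Sum>x\<in>A. \<Sum>y\<in>B. \<bar>a x y\<bar>)" using assms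
    by (intro member_le_sum[of x A "\<lambda>x. \<Sum>y\<in>B. \<bar>a x y\<bar>"]) (auto intro: sum_nonneg)
  finally show ?thesis .
qed

lemma shortfall_lipschitz:
  fixes a :: "'a \<Rightarrow> 'b \<Rightarrow> real"
  assumes A: "finite A" and B: "finite B" and g: "g \<in> prob_simplex B" and h: "h \<in> prob_simplex B"
  shows "shortfall A B a g \<le> shortfall A B a h
    + (real (card A) * 2 * (\<Sum>x\<in>A. \<Sum>y\<in>B. \<bar>a x y\<bar>)\<^sup>2) * (\<Sum>y\<in>B. \<bar>g y - h y\<bar>)"
proof -
  define K where "K = (\<Sum>x\<in>A. \<Sum>y\<in>B. \<bar>a x y\<bar>)"
  define c where "c f x = (\<Sum>y\<in>B. f y * a x y)" for f x
  have aK: "\<bar>a x y\<bar> \<le> K" if "x \<in> A" "y \<in> B" for x y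
    unfolding K_def using abs_le_sum_sum_abs[OF A B that] .
  have cK: "\<bar>c f x\<bar> \<le> K" if "f \<in> prob_simplex B" "x \<in> A" for f x
  proof -
    have "\<bar>c f x\<bar> \<le> (\<Sum>y\<in>B. f y * K)" unfolding c_def
      by (rule order_trans[OF sum_abs], rule sum_mono)
        (use prob_simplex_nonneg[OF that(1)] aK[OF that(2)] in \<open>auto simp: abs_mult intro: mult_left_mono\<close>)
    also have "\<dots> = K" using prob_simplex_sum[OF that(1)] by (simp add: sum_distrib_right[symmetric])
    finally show ?thesis .
  qed
  have c_diff: "\<bar>c g x - c h x\<bar> \<le> K * (\<Sum>y\<in>B. \<bar>g y - h y\<bar>)" if "x \<in> A" for x
  proof -
    have "\<bar>c g x - c h x\<bar> = \<bar>\<Sum>y\<in>B. (g y - h y) * a x y\<bar>"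
      unfolding c_def by (simp add: sum_subtractf[symmetric] algebra_simps)
    also have "\<dots> \<le> (\<Sum>y\<in>B. \<bar>g y - h y\<bar> * K)"
      by (rule order_trans[OF sum_abs], rule sum_mono)
         (use aK[OF that] in \<open>auto simp: abs_mult intro: mult_left_mono\<close>)
    also have "\<dots> = K * (\<Sum>y\<in>B. \<bar>g y - h y\<bar>)" by (simp add: sum_distrib_left mult.commute)
    finally show ?thesis .
  qed
  have "shortfall A B a g - shortfall A B a h = (\<Sum>x\<in>A. (min 0 (c g x))\<^sup>2 - (min 0 (c h x))\<^sup>2)"
    unfolding shortfall_def c_def by (simp add: sum_subtractf)
  also have "\<dots> \<le> (\<Sum>x\<in>A. (K * (\<Sum>y\<in>B. \<bar>g y - h y\<bar>)) * (2 * K))"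
  proof (rule sum_mono)
    fix x assume x: "x \<in> A"
    have "(min 0 (c g x))\<^sup>2 - (min 0 (c h x))\<^sup>2 \<le> \<bar>c g x - c h x\<bar> * (\<bar>c g x\<bar> + \<bar>c h x\<bar>)"
      using min0_sq_diff_le[of "c g x" "c h x"] by linarith
    also have "\<dots> \<le> (K * (\<Sum>y\<in>B. \<bar>g y - h y\<bar>)) * (2 * K)"
      by (rule mult_mono) (use c_diff[OF x] cK[OF g x] cK[OF h x] in auto)
    finally show "(min 0 (c g x))\<^sup>2 - (min 0 (c h x))\<^sup>2 \<le> (K * (\<Sum>y\<in>B. \<bar>g y - h y\<bar>)) * (2 * K)" .
  qed
  also have "\<dots> = (real (card A) * 2 * K\<^sup>2) * (\<Sum>y\<in>B. \<bar>g y - h y\<bar>)"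
    by (simp add: algebra_simps power2_eq_square)
  finally show ?thesis unfolding K_def by linarith
qed

text \<open>Moving the minimiser a step \<open>t\<close> towards the pure column \<open>y\<close> changes the shortfall by at
  most \<open>2 t S + t\<^sup>2 C\<close>, where \<open>S\<close> is the sum in the conclusion; minimality forces \<open>S \<ge> 0\<close>.\<close>

lemma shortfall_min_first_order:
  fixes a :: "'a \<Rightarrow> 'b \<Rightarrow> real"
  assumes A: "finite A" and B: "finite B" and g: "g \<in> prob_simplex B"
    and min: "\<And>f. f \<in> prob_simplex B \<Longrightarrow> shortfall A B a g \<le> shortfall A B a f"
    and y: "y \<in> B"
  shows "0 \<le> (\<Sum>x\<in>A. min 0 (\<Sum>y'\<in>B. g y' * a x y') * (a x y - (\<Sum>y'\<in>B. g y' * a x y')))"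
    (is "0 \<le> ?S")
proof -
  define c where "c x = (\<Sum>y'\<in>B. g y' * a x y')" for x
  define D where "D x = a x y - c x" for x
  define C where "C = (\<Sum>x\<in>A. (D x)\<^sup>2)"
  have S: "?S = (\<Sum>x\<in>A. min 0 (c x) * D x)" by (simp add: c_def D_def)
  have C0: "0 \<le> C" unfolding C_def by (auto intro: sum_nonneg)
  have step: "0 \<le> 2 * ?S + t * C" if t: "0 < t" "t \<le> 1" for t
  proof -
    define f where "f y' = (1 - t) * g y' + t * (if y' = y then 1 else 0)" for y'
    have f_simplex: "f \<in> prob_simplex B"
      unfolding prob_simplex_def f_def using g t y B
      by (auto simp: prob_simplex_def sum.distrib sum_distrib_left[symmetric] intro!: add_nonneg_nonneg mult_nonneg_nonneg)
    have cf: "(\<Sum>y'\<in>B. f y' * a x y') = c x + t * D x" for x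
    proof -
      have "(\<Sum>y'\<in>B. f y' * a x y')
          = (\<Sum>y'\<in>B. (1 - t) * (g y' * a x y')) + (\<Sum>y'\<in>B. t * ((if y' = y then 1 else 0) * a x y'))"
        unfolding f_def by (simp add: sum.distrib[symmetric] algebra_simps)
      also have "(\<Sum>y'\<in>B. t * ((if y' = y then 1 else 0) * a x y')) = t * (\<Sum>y'\<in>B. if y' = y then a x y else 0)"
        unfolding sum_distrib_left by (rule sum.cong) auto
      also have "(\<Sum>y'\<in>B. if y' = y then a x y else 0) = a x y" using B y by simp
      also have "(\<Sum>y'\<in>B. (1 - t) * (g y' * a x y')) = (1 - t) * c x"
        unfolding c_def by (simp add: sum_distrib_left)
      finally show ?thesis by (simp add: D_def algebra_simps)
    qed
    have "shortfall A B a f \<le> (\<Sum>x\<in>A. (min 0 (c x))\<^sup>2 + 2 * min 0 (c x) * (t * D x) + (t * D x)\<^sup>2)"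
      unfolding shortfall_def cf by (rule sum_mono) (rule min0_sq_add_le)
    also have "\<dots> = shortfall A B a g + t * (2 * ?S) + t * t * C"
      unfolding shortfall_def S c_def C_def
      by (simp add: sum.distrib sum_distrib_left power_mult_distrib algebra_simps power2_eq_square)
    finally have "0 \<le> t * (2 * ?S + t * C)" using min[OF f_simplex] by (simp add: algebra_simps)
    thus ?thesis using t by (simp add: zero_le_mult_iff)
  qed
  show ?thesis
  proof (rule ccontr)
    assume "\<not> 0 \<le> ?S"
    hence neg: "?S < 0" by simp
    define t where "t = min 1 (- ?S / (C + 1))"
    have t0: "0 < t" "t \<le> 1" using neg C0 by (auto simp: t_def divide_neg_pos)
    have "t * C \<le> (- ?S / (C + 1)) * C" using C0 by (intro mult_right_mono) (auto simp: t_def)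
    also have "\<dots> = - ?S * (C / (C + 1))" by simp
    also have "\<dots> < - ?S * 1" using neg C0 by (intro mult_strict_left_mono) auto
    finally show False using step[OF t0] neg by linarith
  qed
qed

lemma shortfall_min_separating:
  fixes a :: "'a \<Rightarrow> 'b \<Rightarrow> real"
  assumes A: "finite A" and B: "finite B" and g: "g \<in> prob_simplex B"
    and min: "\<And>f. f \<in> prob_simplex B \<Longrightarrow> shortfall A B a g \<le> shortfall A B a f"
    and pos: "0 < shortfall A B a g"
  shows "\<exists>f\<in>prob_simplex A. \<forall>y\<in>B. (\<Sum>x\<in>A. f x * a x y) < 0"
proof -
  define c where "c x = (\<Sum>y\<in>B. g y * a x y)" for x
  define z where "z x = min 0 (c x)" for x
  define Z where "Z = (\<Sum>x\<in>A. - z x)"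
  have z_le: "z x \<le> 0" for x by (simp add: z_def)
  have z_shortfall: "(\<Sum>x\<in>A. z x * c x) = shortfall A B a g"
    unfolding shortfall_def z_def c_def by (auto simp: power2_eq_square min_def intro: sum.cong)
  have "\<exists>x\<in>A. z x \<noteq> 0"
  proof (rule ccontr)
    assume "\<not> (\<exists>x\<in>A. z x \<noteq> 0)"
    hence "(\<Sum>x\<in>A. z x * c x) = 0" by simp
    thus False using pos z_shortfall by simp
  qed
  then obtain x0 where x0: "x0 \<in> A" "z x0 \<noteq> 0" by blast
  have Z_pos: "0 < Z" unfolding Z_def using x0 z_le
    by (intro sum_pos2[of A x0]) (auto simp: A less_le)
  define f where "f x = (if x \<in> A then - z x / Z else 0)" for x
  have "(\<Sum>x\<in>A. f x) = (\<Sum>x\<in>A. - z x) / Z"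
    unfolding f_def by (simp add: sum_divide_distrib)
  hence f_simplex: "f \<in> prob_simplex A"
    unfolding prob_simplex_def using Z_pos z_le by (auto simp: f_def Z_def divide_nonpos_pos)
  have "(\<Sum>x\<in>A. f x * a x y) < 0" if y: "y \<in> B" for y
  proof -
    have "(\<Sum>x\<in>A. z x * a x y) = (\<Sum>x\<in>A. z x * (a x y - c x)) + shortfall A B a g"
      unfolding z_shortfall[symmetric] by (simp add: algebra_simps sum.distrib[symmetric])
    moreover have "0 \<le> (\<Sum>x\<in>A. z x * (a x y - c x))"
      using shortfall_min_first_order[OF A B g min y] unfolding z_def c_def .
    ultimately have "0 < (\<Sum>x\<in>A. z x * a x y)" using pos by linarith
    moreover have "(\<Sum>x\<in>A. f x * a x y) = - (\<Sum>x\<in>A. z x * a x y) / Z"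
      unfolding f_def by (simp add: sum_divide_distrib sum_negf)
    ultimately show ?thesis using Z_pos by (simp add: divide_neg_pos)
  qed
  thus ?thesis using f_simplex by blast
qed

lemma ville_alternative:
  fixes a :: "'a \<Rightarrow> 'b \<Rightarrow> real"
  assumes A: "finite A" and B: "finite B" "B \<noteq> {}"
  shows "(\<exists>g\<in>prob_simplex B. \<forall>x\<in>A. 0 \<le> (\<Sum>y\<in>B. g y * a x y)) \<or>
         (\<exists>f\<in>prob_simplex A. \<forall>y\<in>B. (\<Sum>x\<in>A. f x * a x y) < 0)"
proof -
  have "\<exists>g\<in>prob_simplex B. \<forall>f\<in>prob_simplex B. shortfall A B a g \<le> shortfall A B a f"
    by (rule prob_simplex_attains_min[OF B, where L = "real (card A) * 2 * (\<Sum>x\<in>A. \<Sum>y\<in>B. \<bar>a x y\<bar>)\<^sup>2"])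
      (simp_all add: shortfall_lipschitz[OF A B(1)])
  then obtain g where g: "g \<in> prob_simplex B"
    and min: "\<And>f. f \<in> prob_simplex B \<Longrightarrow> shortfall A B a g \<le> shortfall A B a f"
    by blast
  have "0 \<le> shortfall A B a g" unfolding shortfall_def by (intro sum_nonneg) simp
  moreover have "\<forall>x\<in>A. 0 \<le> (\<Sum>y\<in>B. g y * a x y)" if "shortfall A B a g = 0"
  proof -
    have "\<forall>x\<in>A. (min 0 (\<Sum>y\<in>B. g y * a x y))\<^sup>2 = 0"
      using A that unfolding shortfall_def by (subst (asm) sum_nonneg_eq_0_iff) auto
    thus ?thesis by (auto simp: min_def split: if_splits)
  qed
  ultimately show ?thesis using shortfall_min_separating[OF A B(1) g min] g by force
qed

definition mixed_payoff :: "'a set \<Rightarrow> 'b set \<Rightarrow> ('a \<Rightarrow> 'b \<Rightarrow> real) \<Rightarrow> 'a pmf \<Rightarrow> 'b pmf \<Rightarrow> real" where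
  "mixed_payoff A B q \<rho> \<sigma> = (\<Sum>u\<in>A. \<Sum>v\<in>B. pmf \<rho> u * pmf \<sigma> v * q u v)"

definition pmfs_on :: "'a set \<Rightarrow> 'a pmf set" where
  "pmfs_on A = {\<rho>. set_pmf \<rho> \<subseteq> A}"

definition sup_payoff :: "'a set \<Rightarrow> 'b set \<Rightarrow> ('a \<Rightarrow> 'b \<Rightarrow> real) \<Rightarrow> 'a pmf \<Rightarrow> real" where
  "sup_payoff A B q \<rho> = Max ((\<lambda>v. \<Sum>u\<in>A. pmf \<rho> u * q u v) ` B)"

definition inf_payoff :: "'a set \<Rightarrow> 'b set \<Rightarrow> ('a \<Rightarrow> 'b \<Rightarrow> real) \<Rightarrow> 'b pmf \<Rightarrow> real" where
  "inf_payoff A B q \<sigma> = Min ((\<lambda>u. \<Sum>v\<in>B. pmf \<sigma> v * q u v) ` A)"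

lemma pmfs_on_nonempty: "A \<noteq> {} \<Longrightarrow> pmfs_on A \<noteq> {}"
  by (auto simp: pmfs_on_def intro!: exI[of _ "return_pmf (SOME x. x \<in> A)"] some_in_eq[THEN iffD2])

lemma return_pmf_in_pmfs_on: "x \<in> A \<Longrightarrow> return_pmf x \<in> pmfs_on A"
  by (simp add: pmfs_on_def)

lemma pmfs_on_in_prob_simplex: "finite A \<Longrightarrow> \<rho> \<in> pmfs_on A \<Longrightarrow> pmf \<rho> \<in> prob_simplex A"
  by (simp add: pmfs_on_def pmf_in_prob_simplex)

lemma convex_comb_le_Max:
  fixes w r :: "'b \<Rightarrow> real"
  assumes "finite B" "\<And>v. 0 \<le> w v" "sum w B = 1"
  shows "(\<Sum>v\<in>B. w v * r v) \<le> Max (r ` B)"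
proof -
  have "(\<Sum>v\<in>B. w v * r v) \<le> (\<Sum>v\<in>B. w v * Max (r ` B))"
    using assms by (intro sum_mono mult_left_mono) auto
  also have "\<dots> = Max (r ` B)" using assms(3) by (simp add: sum_distrib_right[symmetric])
  finally show ?thesis .
qed

lemma Min_le_convex_comb:
  fixes w r :: "'b \<Rightarrow> real"
  assumes "finite B" "\<And>v. 0 \<le> w v" "sum w B = 1"
  shows "Min (r ` B) \<le> (\<Sum>v\<in>B. w v * r v)"
proof -
  have "(\<Sum>v\<in>B. w v * Min (r ` B)) \<le> (\<Sum>v\<in>B. w v * r v)"
    using assms by (intro sum_mono mult_left_mono) auto
  also have "(\<Sum>v\<in>B. w v * Min (r ` B)) = Min (r ` B)" using assms(3) by (simp add: sum_distrib_right[symmetric])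
  finally show ?thesis .
qed

lemma mixed_payoff_cols: "mixed_payoff A B q \<rho> \<sigma> = (\<Sum>v\<in>B. pmf \<sigma> v * (\<Sum>u\<in>A. pmf \<rho> u * q u v))"
  unfolding mixed_payoff_def by (subst sum.swap) (simp add: sum_distrib_left algebra_simps)

lemma mixed_payoff_rows: "mixed_payoff A B q \<rho> \<sigma> = (\<Sum>u\<in>A. pmf \<rho> u * (\<Sum>v\<in>B. pmf \<sigma> v * q u v))"
  unfolding mixed_payoff_def by (simp add: sum_distrib_left algebra_simps)

lemma mixed_payoff_le_sup_payoff:
  "finite B \<Longrightarrow> \<sigma> \<in> pmfs_on B \<Longrightarrow> mixed_payoff A B q \<rho> \<sigma> \<le> sup_payoff A B q \<rho>"
  unfolding mixed_payoff_cols sup_payoff_def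
  by (intro convex_comb_le_Max) (auto simp: pmfs_on_def sum_pmf_eq_1 pmf_nonneg)

lemma inf_payoff_le_mixed_payoff:
  "finite A \<Longrightarrow> \<rho> \<in> pmfs_on A \<Longrightarrow> inf_payoff A B q \<sigma> \<le> mixed_payoff A B q \<rho> \<sigma>"
  unfolding mixed_payoff_rows inf_payoff_def
  by (intro Min_le_convex_comb) (auto simp: pmfs_on_def sum_pmf_eq_1 pmf_nonneg)

lemma mixed_payoff_return_col:
  "finite B \<Longrightarrow> v \<in> B \<Longrightarrow> mixed_payoff A B q \<rho> (return_pmf v) = (\<Sum>u\<in>A. pmf \<rho> u * q u v)"
  unfolding mixed_payoff_cols by (simp add: indicator_def sum.delta' cong: if_cong)

lemma mixed_payoff_return_row:
  "finite A \<Longrightarrow> u \<in> A \<Longrightarrow> mixed_payoff A B q (return_pmf u) \<sigma> = (\<Sum>v\<in>B. pmf \<sigma> v * q u v)"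
  unfolding mixed_payoff_rows by (simp add: indicator_def sum.delta' cong: if_cong)

lemma sup_payoff_attained:
  assumes "finite B" "B \<noteq> {}"
  obtains v where "v \<in> B" "sup_payoff A B q \<rho> = mixed_payoff A B q \<rho> (return_pmf v)"
proof -
  have "sup_payoff A B q \<rho> \<in> (\<lambda>v. \<Sum>u\<in>A. pmf \<rho> u * q u v) ` B"
    unfolding sup_payoff_def using assms by (intro Max_in) auto
  then obtain v where "v \<in> B" "sup_payoff A B q \<rho> = (\<Sum>u\<in>A. pmf \<rho> u * q u v)" by blast
  with assms(1) show ?thesis using that mixed_payoff_return_col by metis
qed

lemma inf_payoff_attained:
  assumes "finite A" "A \<noteq> {}"
  obtains u where "u \<in> A" "inf_payoff A B q \<sigma> = mixed_payoff A B q (return_pmf u) \<sigma>"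
proof -
  have "inf_payoff A B q \<sigma> \<in> (\<lambda>u. \<Sum>v\<in>B. pmf \<sigma> v * q u v) ` A"
    unfolding inf_payoff_def using assms by (intro Min_in) auto
  then obtain u where "u \<in> A" "inf_payoff A B q \<sigma> = (\<Sum>v\<in>B. pmf \<sigma> v * q u v)" by blast
  with assms(1) show ?thesis using that mixed_payoff_return_row by metis
qed

lemma SUP_mixed_payoff:
  assumes "finite B" "B \<noteq> {}"
  shows "(SUP \<sigma>\<in>pmfs_on B. mixed_payoff A B q \<rho> \<sigma>) = sup_payoff A B q \<rho>"
proof -
  obtain v where v: "v \<in> B" and eq: "sup_payoff A B q \<rho> = mixed_payoff A B q \<rho> (return_pmf v)"
    using sup_payoff_attained[OF assms] .
  have "sup_payoff A B q \<rho> \<in> mixed_payoff A B q \<rho> ` pmfs_on B"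
    unfolding eq by (rule imageI, rule return_pmf_in_pmfs_on[OF v])
  then show ?thesis
    by (rule cSup_eq_maximum) (auto simp: mixed_payoff_le_sup_payoff[OF assms(1)])
qed

lemma INF_mixed_payoff:
  assumes "finite A" "A \<noteq> {}"
  shows "(INF \<rho>\<in>pmfs_on A. mixed_payoff A B q \<rho> \<sigma>) = inf_payoff A B q \<sigma>"
proof -
  obtain u where u: "u \<in> A" and eq: "inf_payoff A B q \<sigma> = mixed_payoff A B q (return_pmf u) \<sigma>"
    using inf_payoff_attained[OF assms] .
  have "inf_payoff A B q \<sigma> \<in> (\<lambda>\<rho>. mixed_payoff A B q \<rho> \<sigma>) ` pmfs_on A"
    unfolding eq by (rule imageI, rule return_pmf_in_pmfs_on[OF u])
  then show ?thesis
    by (rule cInf_eq_minimum) (auto simp: inf_payoff_le_mixed_payoff[OF assms(1)])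
qed

lemma inf_payoff_le_sup_payoff:
  "finite A \<Longrightarrow> finite B \<Longrightarrow> \<rho> \<in> pmfs_on A \<Longrightarrow> \<sigma> \<in> pmfs_on B \<Longrightarrow> inf_payoff A B q \<sigma> \<le> sup_payoff A B q \<rho>"
  using inf_payoff_le_mixed_payoff[of A \<rho> B q \<sigma>] mixed_payoff_le_sup_payoff[of B \<sigma> A q \<rho>] by linarith

lemma sup_payoff_le_add:
  assumes "finite A" "finite B" "B \<noteq> {}" "\<rho> \<in> pmfs_on A"
    and "\<And>u v. u \<in> A \<Longrightarrow> v \<in> B \<Longrightarrow> q' u v \<le> q u v + d"
  shows "sup_payoff A B q' \<rho> \<le> sup_payoff A B q \<rho> + d"
  unfolding sup_payoff_def
proof (subst Max_le_iff, simp_all add: assms(2,3), intro ballI)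
  fix v assume v: "v \<in> B"
  have "(\<Sum>u\<in>A. pmf \<rho> u * q' u v) \<le> (\<Sum>u\<in>A. pmf \<rho> u * (q u v + d))"
    using assms(5) v by (intro sum_mono mult_left_mono) auto
  also have "\<dots> = (\<Sum>u\<in>A. pmf \<rho> u * q u v) + d"
    using sum_pmf_eq_1[OF assms(1), of \<rho>] assms(4)
    by (simp add: pmfs_on_def algebra_simps sum.distrib sum_distrib_left[symmetric])
  also have "(\<Sum>u\<in>A. pmf \<rho> u * q u v) \<le> Max ((\<lambda>v. \<Sum>u\<in>A. pmf \<rho> u * q u v) ` B)"
    using assms(2) v by (intro Max_ge) auto
  finally show "(\<Sum>u\<in>A. pmf \<rho> u * q' u v) \<le> Max ((\<lambda>v. \<Sum>u\<in>A. pmf \<rho> u * q u v) ` B) + d"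
    by simp
qed

lemma weighted_sum_lipschitz:
  fixes q :: "'a \<Rightarrow> 'b \<Rightarrow> real"
  assumes "finite A" "finite B" "v \<in> B"
  shows "(\<Sum>u\<in>A. f u * q u v) \<le> (\<Sum>u\<in>A. g u * q u v) + (\<Sum>u\<in>A. \<Sum>v\<in>B. \<bar>q u v\<bar>) * (\<Sum>u\<in>A. \<bar>f u - g u\<bar>)"
proof -
  define K where "K = (\<Sum>u\<in>A. \<Sum>v\<in>B. \<bar>q u v\<bar>)"
  have "(\<Sum>u\<in>A. f u * q u v) - (\<Sum>u\<in>A. g u * q u v) = (\<Sum>u\<in>A. (f u - g u) * q u v)"
    by (simp add: sum_subtractf[symmetric] algebra_simps)
  also have "\<dots> \<le> (\<Sum>u\<in>A. \<bar>f u - g u\<bar> * K)"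
  proof (rule sum_mono)
    fix u assume u: "u \<in> A"
    have "\<bar>q u v\<bar> \<le> K" unfolding K_def by (rule abs_le_sum_sum_abs[OF assms(1,2) u assms(3)])
    hence "\<bar>f u - g u\<bar> * \<bar>q u v\<bar> \<le> \<bar>f u - g u\<bar> * K" by (rule mult_left_mono) simp
    moreover have "(f u - g u) * q u v \<le> \<bar>f u - g u\<bar> * \<bar>q u v\<bar>"
      unfolding abs_mult[symmetric] by (rule abs_ge_self)
    ultimately show "(f u - g u) * q u v \<le> \<bar>f u - g u\<bar> * K" by (rule order_trans[rotated])
  qed
  also have "\<dots> = K * (\<Sum>u\<in>A. \<bar>f u - g u\<bar>)" by (simp add: sum_distrib_left mult.commute)
  finally show ?thesis unfolding K_def by linarith
qed

lemma sup_payoff_attains_min: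
  fixes q :: "'a \<Rightarrow> 'b \<Rightarrow> real"
  assumes A: "finite A" "A \<noteq> {}" and B: "finite B" "B \<noteq> {}"
  shows "\<exists>\<rho>\<in>pmfs_on A. \<forall>\<rho>'\<in>pmfs_on A. sup_payoff A B q \<rho> \<le> sup_payoff A B q \<rho>'"
proof -
  define F where "F f = Max ((\<lambda>v. \<Sum>u\<in>A. f u * q u v) ` B)" for f :: "'a \<Rightarrow> real"
  have "\<exists>f\<in>prob_simplex A. \<forall>g\<in>prob_simplex A. F f \<le> F g"
  proof (rule prob_simplex_attains_min[OF A])
    fix f g
    show "F f \<le> F g + (\<Sum>u\<in>A. \<Sum>v\<in>B. \<bar>q u v\<bar>) * (\<Sum>x\<in>A. \<bar>f x - g x\<bar>)"
      unfolding F_def using B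
    proof (subst Max_le_iff, simp_all, intro ballI)
      fix v assume v: "v \<in> B"
      have "(\<Sum>u\<in>A. g u * q u v) \<le> Max ((\<lambda>v. \<Sum>u\<in>A. g u * q u v) ` B)"
        using B v by (intro Max_ge) auto
      thus "(\<Sum>u\<in>A. f u * q u v) \<le> Max ((\<lambda>v. \<Sum>u\<in>A. g u * q u v) ` B) + (\<Sum>u\<in>A. \<Sum>v\<in>B. \<bar>q u v\<bar>) * (\<Sum>x\<in>A. \<bar>f x - g x\<bar>)"
        using weighted_sum_lipschitz[OF A(1) B(1) v, of f q g] by linarith
    qed
  qed (auto intro: sum_nonneg)
  then obtain f where f: "f \<in> prob_simplex A" "\<And>g. g \<in> prob_simplex A \<Longrightarrow> F f \<le> F g" by blast
  obtain \<rho> where \<rho>: "set_pmf \<rho> \<subseteq> A" "pmf \<rho> = f" using prob_simplex_is_pmf[OF A(1) f(1)] .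
  have "sup_payoff A B q \<rho> \<le> sup_payoff A B q \<rho>'" if "\<rho>' \<in> pmfs_on A" for \<rho>'
    using f(2)[OF pmfs_on_in_prob_simplex[OF A(1) that]] unfolding sup_payoff_def F_def \<rho>(2)[symmetric] .
  thus ?thesis using \<rho>(1) by (auto simp: pmfs_on_def)
qed

lemma inf_payoff_attains_max:
  fixes q :: "'a \<Rightarrow> 'b \<Rightarrow> real"
  assumes A: "finite A" "A \<noteq> {}" and B: "finite B" "B \<noteq> {}"
  shows "\<exists>\<sigma>\<in>pmfs_on B. \<forall>\<sigma>'\<in>pmfs_on B. inf_payoff A B q \<sigma>' \<le> inf_payoff A B q \<sigma>"
proof -
  have "inf_payoff A B q \<sigma> = - sup_payoff B A (\<lambda>v u. - q u v) \<sigma>" for \<sigma>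
  proof -
    define R where "R = (\<lambda>u. \<Sum>v\<in>B. pmf \<sigma> v * q u v) ` A"
    have "(\<lambda>u. \<Sum>v\<in>B. pmf \<sigma> v * - q u v) ` A = uminus ` R"
      unfolding R_def image_image by (simp add: sum_negf)
    moreover have "- Min R = Max (uminus ` R)" using A unfolding R_def by (intro minus_Min_eq_Max) auto
    ultimately show ?thesis unfolding inf_payoff_def sup_payoff_def R_def by (simp add: mult.commute)
  qed
  with sup_payoff_attains_min[OF B A, of "\<lambda>v u. - q u v"] show ?thesis by fastforce
qed

lemma ville_payoff:
  fixes q :: "'a \<Rightarrow> 'b \<Rightarrow> real"
  assumes A: "finite A" "A \<noteq> {}" and B: "finite B" "B \<noteq> {}"
  shows "(\<exists>\<sigma>\<in>pmfs_on B. t \<le> inf_payoff A B q \<sigma>) \<or> (\<exists>\<rho>\<in>pmfs_on A. sup_payoff A B q \<rho> < t)"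
  using ville_alternative[OF A(1) B, of "\<lambda>u v. q u v - t"]
proof
  assume "\<exists>g\<in>prob_simplex B. \<forall>x\<in>A. 0 \<le> (\<Sum>y\<in>B. g y * (q x y - t))"
  then obtain g where g: "g \<in> prob_simplex B" "\<And>x. x \<in> A \<Longrightarrow> 0 \<le> (\<Sum>y\<in>B. g y * (q x y - t))" by blast
  obtain \<sigma> where \<sigma>: "set_pmf \<sigma> \<subseteq> B" "pmf \<sigma> = g" using prob_simplex_is_pmf[OF B(1) g(1)] .
  have "t \<le> inf_payoff A B q \<sigma>" unfolding inf_payoff_def using A
  proof (subst Min_ge_iff, simp_all, intro ballI)
    fix x assume x: "x \<in> A"
    have "(\<Sum>y\<in>B. g y * (q x y - t)) = (\<Sum>y\<in>B. g y * q x y) - t"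
      using prob_simplex_sum[OF g(1)] by (simp add: algebra_simps sum_subtractf sum_distrib_left[symmetric])
    thus "t \<le> (\<Sum>v\<in>B. pmf \<sigma> v * q x v)" using g(2)[OF x] \<sigma>(2) by simp
  qed
  thus ?thesis using \<sigma>(1) by (auto simp: pmfs_on_def)
next
  assume "\<exists>f\<in>prob_simplex A. \<forall>y\<in>B. (\<Sum>x\<in>A. f x * (q x y - t)) < 0"
  then obtain f where f: "f \<in> prob_simplex A" "\<And>y. y \<in> B \<Longrightarrow> (\<Sum>x\<in>A. f x * (q x y - t)) < 0" by blast
  obtain \<rho> where \<rho>: "set_pmf \<rho> \<subseteq> A" "pmf \<rho> = f" using prob_simplex_is_pmf[OF A(1) f(1)] .
  have "sup_payoff A B q \<rho> < t" unfolding sup_payoff_def using B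
  proof (subst Max_less_iff, simp_all, intro ballI)
    fix y assume y: "y \<in> B"
    have "(\<Sum>x\<in>A. f x * (q x y - t)) = (\<Sum>x\<in>A. f x * q x y) - t"
      using prob_simplex_sum[OF f(1)] by (simp add: algebra_simps sum_subtractf sum_distrib_left[symmetric])
    thus "(\<Sum>u\<in>A. pmf \<rho> u * q u y) < t" using f(2)[OF y] \<rho>(2) by simp
  qed
  thus ?thesis using \<rho>(1) by (auto simp: pmfs_on_def)
qed

theorem minimax_theorem:
  fixes q :: "'a \<Rightarrow> 'b \<Rightarrow> real"
  assumes A: "finite A" "A \<noteq> {}" and B: "finite B" "B \<noteq> {}"
  shows "(INF \<rho>\<in>pmfs_on A. sup_payoff A B q \<rho>) = (SUP \<sigma>\<in>pmfs_on B. inf_payoff A B q \<sigma>)"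
    (is "?up = ?lo")
proof -
  obtain \<rho>0 where \<rho>0: "\<rho>0 \<in> pmfs_on A" using pmfs_on_nonempty[OF A(2)] by blast
  obtain \<sigma>0 where \<sigma>0: "\<sigma>0 \<in> pmfs_on B" using pmfs_on_nonempty[OF B(2)] by blast
  have weak: "inf_payoff A B q \<sigma> \<le> sup_payoff A B q \<rho>" if "\<rho> \<in> pmfs_on A" "\<sigma> \<in> pmfs_on B" for \<rho> \<sigma>
    using inf_payoff_le_sup_payoff[OF A(1) B(1) that] .
  have bdd_below: "bdd_below (sup_payoff A B q ` pmfs_on A)"
    using weak[OF _ \<sigma>0] by (auto intro!: bdd_belowI)
  have bdd_above: "bdd_above (inf_payoff A B q ` pmfs_on B)"
    using weak[OF \<rho>0] by (auto intro!: bdd_aboveI)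
  have "?lo \<le> ?up"
    using weak by (intro cSUP_least cINF_greatest pmfs_on_nonempty A(2) B(2)) auto
  moreover have "\<not> ?lo < ?up"
  proof
    assume "?lo < ?up"
    then obtain t where t: "?lo < t" "t < ?up" using dense by blast
    from ville_payoff[OF A B, of t q] show False
    proof
      assume "\<exists>\<sigma>\<in>pmfs_on B. t \<le> inf_payoff A B q \<sigma>"
      then obtain \<sigma> where "\<sigma> \<in> pmfs_on B" "t \<le> inf_payoff A B q \<sigma>" by blast
      thus False using t(1) cSUP_upper[OF _ bdd_above, of \<sigma>] by simp
    next
      assume "\<exists>\<rho>\<in>pmfs_on A. sup_payoff A B q \<rho> < t"
      then obtain \<rho> where "\<rho> \<in> pmfs_on A" "sup_payoff A B q \<rho> < t" by blast
      thus False using t(2) cINF_lower[OF bdd_below, of \<rho>] by simp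
    qed
  qed
  ultimately show ?thesis by linarith
qed

section \<open>The stochastic shortest path game\<close>

lemma iterate_tendsto_fixpoint:
  fixes T :: "('a \<Rightarrow> real) \<Rightarrow> 'a \<Rightarrow> real"
  assumes S: "finite S"
    and T: "\<And>X Y d i. 0 \<le> d \<Longrightarrow> (\<And>j. j \<in> S \<Longrightarrow> X j \<le> Y j + d) \<Longrightarrow> i \<in> S \<Longrightarrow> T X i \<le> T Y i + d"
    and super: "\<And>i. i \<in> S \<Longrightarrow> T X0 i \<le> X0 i"
    and sub: "\<And>i. i \<in> S \<Longrightarrow> B i \<le> T B i" and below: "\<And>i. i \<in> S \<Longrightarrow> B i \<le> X0 i"
  obtains L where "\<And>i. i \<in> S \<Longrightarrow> T L i = L i" "\<And>i. i \<in> S \<Longrightarrow> (\<lambda>k. (T ^^ k) X0 i) \<longlonglongrightarrow> L i"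
proof -
  define W where "W k = (T ^^ k) X0" for k
  have mono: "T X i \<le> T Y i" if "\<And>j. j \<in> S \<Longrightarrow> X j \<le> Y j" "i \<in> S" for X Y i
    using T[of 0 X Y i] that by simp
  have dec: "W (Suc k) j \<le> W k j" if "j \<in> S" for j k
    using that by (induction k arbitrary: j) (auto simp: W_def super intro: mono)
  have low: "B j \<le> W k j" if "j \<in> S" for j k
    using that by (induction k arbitrary: j) (auto simp: W_def below intro: order_trans[OF sub] mono)
  define L where "L j = (INF k. W k j)" for j
  have bdd: "bdd_below (range (\<lambda>k. W k j))" if "j \<in> S" for j
    using low[OF that] by (auto intro!: bdd_belowI)
  have lim: "(\<lambda>k. W k j) \<longlonglongrightarrow> L j" if "j \<in> S" for j
    unfolding L_def by (rule LIMSEQ_decseq_INF[OF bdd[OF that]]) (use dec[OF that] in \<open>simp add: decseq_SucI\<close>)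
  have L_le: "L j \<le> W k j" if "j \<in> S" for j k
    unfolding L_def by (rule cINF_lower[OF bdd[OF that]]) simp
  have fixpoint: "T L i = L i" if i: "i \<in> S" for i
  proof (rule antisym)
    have "T L i \<le> W (Suc k) i" for k
      using mono[OF L_le[of _ k] i] by (simp add: W_def)
    thus "T L i \<le> L i" by (intro LIMSEQ_le_const[OF LIMSEQ_Suc[OF lim[OF i]]]) auto
    show "L i \<le> T L i"
    proof (rule field_le_epsilon)
      fix e :: real assume e: "0 < e"
      have "\<forall>\<^sub>F k in sequentially. \<forall>j\<in>S. W k j < L j + e"
        using lim e by (intro eventually_ball_finite[OF S] ballI order_tendstoD(2)) auto
      hence "\<exists>k. \<forall>j\<in>S. W k j < L j + e" by (rule eventually_happens'[OF sequentially_bot])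
      then obtain k where "\<forall>j\<in>S. W k j < L j + e" ..
      hence k: "\<And>j. j \<in> S \<Longrightarrow> W k j \<le> L j + e" by (simp add: less_imp_le)
      have "L i \<le> W (Suc k) i" by (rule L_le[OF i])
      also have "\<dots> = T (W k) i" by (simp add: W_def)
      also have "\<dots> \<le> T L i + e" by (rule T[OF _ k i]) (use e in simp)
      finally show "L i \<le> T L i + e" .
    qed
  qed
  show ?thesis using that[OF fixpoint lim[unfolded W_def]] .
qed

lemma sum_pmf_le_1: "finite A \<Longrightarrow> (\<Sum>x\<in>A. pmf \<rho> x) \<le> 1"
  using measure_measure_pmf_finite[of A \<rho>] measure_pmf.prob_le_1[of \<rho> A] by simp

lemma cur_hext [simp]: "cur (hext h u v j) = j"
  by (simp add: cur_def hext_def)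

lemma cur_Nil [simp]: "cur (i, []) = i"
  by (simp add: cur_def)

fun ecost_term ::
  "nat \<Rightarrow> (nat \<Rightarrow> 'u set) \<Rightarrow> (nat \<Rightarrow> 'v set) \<Rightarrow> (nat \<Rightarrow> nat \<Rightarrow> 'u \<Rightarrow> 'v \<Rightarrow> real)
   \<Rightarrow> (nat \<Rightarrow> 'u \<Rightarrow> 'v \<Rightarrow> nat \<Rightarrow> real) \<Rightarrow> (nat \<Rightarrow> real)
   \<Rightarrow> (('u, 'v) hist \<Rightarrow> 'u pmf) \<Rightarrow> (('u, 'v) hist \<Rightarrow> 'v pmf) \<Rightarrow> nat \<Rightarrow> ('u, 'v) hist \<Rightarrow> real" where
  "ecost_term n U V p gh W \<pi>1 \<pi>2 0 h = (if cur h \<in> states n then W (cur h) else 0)"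
| "ecost_term n U V p gh W \<pi>1 \<pi>2 (Suc m) h =
     (if cur h \<in> states n then
        (\<Sum>u\<in>U (cur h). \<Sum>v\<in>V (cur h). pmf (\<pi>1 h) u * pmf (\<pi>2 h) v *
           (\<Sum>j\<in>{0..n}. p (cur h) j u v *
              (gh (cur h) u v j + ecost_term n U V p gh W \<pi>1 \<pi>2 m (hext h u v j))))
      else 0)"

locale ssp_model =
  fixes n :: nat and U :: "nat \<Rightarrow> 'u set" and V :: "nat \<Rightarrow> 'v set"
    and p :: "nat \<Rightarrow> nat \<Rightarrow> 'u \<Rightarrow> 'v \<Rightarrow> real"
    and gh :: "nat \<Rightarrow> 'u \<Rightarrow> 'v \<Rightarrow> nat \<Rightarrow> real"
  assumes model: "game_model n U V p"
begin

abbreviation "S \<equiv> states n"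
abbreviation "ec \<equiv> ecost n U V p gh"
abbreviation "sv \<equiv> survp n U V p"
abbreviation "ect \<equiv> ecost_term n U V p gh"

lemma finite_S: "finite S" by (simp add: states_def)
lemma S_subset: "S \<subseteq> {0..n}" by (auto simp: states_def)

lemma finite_U: "i \<in> S \<Longrightarrow> finite (U i)" and U_nonempty: "i \<in> S \<Longrightarrow> U i \<noteq> {}"
  and finite_V: "i \<in> S \<Longrightarrow> finite (V i)" and V_nonempty: "i \<in> S \<Longrightarrow> V i \<noteq> {}"
  using model by (auto simp: game_model_def)

lemma p_nonneg: "i \<in> S \<Longrightarrow> u \<in> U i \<Longrightarrow> v \<in> V i \<Longrightarrow> j \<in> {0..n} \<Longrightarrow> 0 \<le> p i j u v"
  using model by (auto simp: game_model_def)

lemma p_sum_eq_1: "i \<in> S \<Longrightarrow> u \<in> U i \<Longrightarrow> v \<in> V i \<Longrightarrow> (\<Sum>j\<in>{0..n}. p i j u v) = 1"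
  using model by (auto simp: game_model_def)

lemma p_sum_S_le_1: "i \<in> S \<Longrightarrow> u \<in> U i \<Longrightarrow> v \<in> V i \<Longrightarrow> (\<Sum>j\<in>S. p i j u v) \<le> 1"
  using p_sum_eq_1[of i u v] sum_mono2[OF _ S_subset, of "\<lambda>j. p i j u v"] p_nonneg[of i u v] by force

definition expect :: "nat \<Rightarrow> 'u pmf \<Rightarrow> 'v pmf \<Rightarrow> ('u \<Rightarrow> 'v \<Rightarrow> nat \<Rightarrow> real) \<Rightarrow> real" where
  "expect i \<rho> \<sigma> X = (\<Sum>u\<in>U i. \<Sum>v\<in>V i. pmf \<rho> u * pmf \<sigma> v * (\<Sum>j\<in>{0..n}. p i j u v * X u v j))"

lemma expect_mono:
  assumes "i \<in> S" "\<And>u v j. u \<in> U i \<Longrightarrow> v \<in> V i \<Longrightarrow> j \<in> {0..n} \<Longrightarrow> X u v j \<le> Y u v j"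
  shows "expect i \<rho> \<sigma> X \<le> expect i \<rho> \<sigma> Y"
  unfolding expect_def using assms p_nonneg
  by (intro sum_mono mult_left_mono) (auto simp: pmf_nonneg)

lemma expect_diff: "expect i \<rho> \<sigma> (\<lambda>u v j. X u v j - Y u v j) = expect i \<rho> \<sigma> X - expect i \<rho> \<sigma> Y"
  unfolding expect_def by (simp add: algebra_simps sum_subtractf)

lemma expect_cmult: "expect i \<rho> \<sigma> (\<lambda>u v j. c * X u v j) = c * expect i \<rho> \<sigma> X"
  unfolding expect_def by (simp add: algebra_simps sum_distrib_left)

lemma abs_expect_le: "i \<in> S \<Longrightarrow> \<bar>expect i \<rho> \<sigma> X\<bar> \<le> expect i \<rho> \<sigma> (\<lambda>u v j. \<bar>X u v j\<bar>)"
  unfolding expect_def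
  apply (rule order_trans[OF sum_abs], rule sum_mono)
  apply (rule order_trans[OF sum_abs], rule sum_mono)
  using p_nonneg by (auto simp: abs_mult pmf_nonneg intro!: mult_left_mono order_trans[OF sum_abs] sum_mono)

lemma expect_nonneg:
  "i \<in> S \<Longrightarrow> (\<And>u v j. u \<in> U i \<Longrightarrow> v \<in> V i \<Longrightarrow> j \<in> {0..n} \<Longrightarrow> 0 \<le> X u v j) \<Longrightarrow> 0 \<le> expect i \<rho> \<sigma> X"
  using expect_mono[of i "\<lambda>u v j. 0" X \<rho> \<sigma>] by (simp add: expect_def)

lemma expect_one_le: "i \<in> S \<Longrightarrow> expect i \<rho> \<sigma> (\<lambda>u v j. 1) \<le> 1"
proof -
  assume i: "i \<in> S"
  have "expect i \<rho> \<sigma> (\<lambda>u v j. 1) = (\<Sum>u\<in>U i. pmf \<rho> u * (\<Sum>v\<in>V i. pmf \<sigma> v))"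
    unfolding expect_def using p_sum_eq_1[OF i] by (simp add: sum_distrib_left)
  also have "\<dots> \<le> (\<Sum>u\<in>U i. pmf \<rho> u * 1)"
    using sum_pmf_le_1[OF finite_V[OF i]] by (intro sum_mono mult_left_mono) (auto simp: pmf_nonneg)
  also have "\<dots> \<le> 1" using sum_pmf_le_1[OF finite_U[OF i]] by simp
  finally show ?thesis .
qed

lemma expect_const_le: "i \<in> S \<Longrightarrow> 0 \<le> c \<Longrightarrow> expect i \<rho> \<sigma> (\<lambda>u v j. c) \<le> c"
  using expect_cmult[of i \<rho> \<sigma> c "\<lambda>u v j. 1"] expect_one_le[of i \<rho> \<sigma>]
  by (simp add: mult_left_le)

lemma ecost_Suc:
  "cur h \<in> S \<Longrightarrow> ec \<pi>1 \<pi>2 (Suc m) h = expect (cur h) (\<pi>1 h) (\<pi>2 h) (\<lambda>u v j. gh (cur h) u v j + ec \<pi>1 \<pi>2 m (hext h u v j))"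
  by (simp add: expect_def)

lemma survp_Suc:
  "cur h \<in> S \<Longrightarrow> sv \<pi>1 \<pi>2 (Suc m) h = expect (cur h) (\<pi>1 h) (\<pi>2 h) (\<lambda>u v j. sv \<pi>1 \<pi>2 m (hext h u v j))"
  by (simp add: expect_def)

lemma ecost_term_Suc:
  "cur h \<in> S \<Longrightarrow> ect W \<pi>1 \<pi>2 (Suc m) h = expect (cur h) (\<pi>1 h) (\<pi>2 h) (\<lambda>u v j. gh (cur h) u v j + ect W \<pi>1 \<pi>2 m (hext h u v j))"
  by (simp add: expect_def)

lemma ecost_outside: "cur h \<notin> S \<Longrightarrow> ec \<pi>1 \<pi>2 k h = 0" by (cases k) auto
lemma survp_outside: "cur h \<notin> S \<Longrightarrow> sv \<pi>1 \<pi>2 k h = 0" by (cases k) auto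
lemma ecost_term_outside: "cur h \<notin> S \<Longrightarrow> ect W \<pi>1 \<pi>2 k h = 0" by (cases k) auto

declare ecost.simps(2)[simp del] survp.simps(2)[simp del] ecost_term.simps(2)[simp del]

lemma ecost_eq_ecost_term_0: "ec \<pi>1 \<pi>2 k h = ect (\<lambda>_. 0) \<pi>1 \<pi>2 k h"
  by (induction k arbitrary: h) (auto simp: ecost.simps ecost_term.simps)

lemma survp_nonneg: "0 \<le> sv \<pi>1 \<pi>2 k h"
proof (induction k arbitrary: h)
  case (Suc k)
  show ?case
  proof (cases "cur h \<in> S")
    case True
    show ?thesis unfolding survp_Suc[OF True] by (rule expect_nonneg[OF True]) (use Suc in auto)
  qed (simp add: survp_outside)
qed simp

lemma survp_le_1: "sv \<pi>1 \<pi>2 k h \<le> 1"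
proof (induction k arbitrary: h)
  case (Suc k)
  show ?case
  proof (cases "cur h \<in> S")
    case True
    have "sv \<pi>1 \<pi>2 (Suc k) h \<le> expect (cur h) (\<pi>1 h) (\<pi>2 h) (\<lambda>u v j. 1)"
      unfolding survp_Suc[OF True] by (rule expect_mono[OF True]) (use Suc in auto)
    also have "\<dots> \<le> 1" by (rule expect_one_le[OF True])
    finally show ?thesis .
  qed (simp add: survp_outside)
qed simp

lemma survp_Suc_le: "sv \<pi>1 \<pi>2 (Suc k) h \<le> sv \<pi>1 \<pi>2 k h"
proof (induction k arbitrary: h)
  case 0
  show ?case
  proof (cases "cur h \<in> S")
    case True
    then show ?thesis using survp_le_1[of \<pi>1 \<pi>2 1 h] by simp
  qed (simp add: survp_outside)
next
  case (Suc k)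
  show ?case
  proof (cases "cur h \<in> S")
    case True
    show ?thesis unfolding survp_Suc[OF True] by (rule expect_mono[OF True]) (use Suc in auto)
  qed (simp add: survp_outside)
qed

lemma survp_antimono: "k \<le> k' \<Longrightarrow> sv \<pi>1 \<pi>2 k' h \<le> sv \<pi>1 \<pi>2 k h"
  by (induction k' rule: dec_induct) (auto intro: order_trans[OF survp_Suc_le])

lemma survp_add_le:
  assumes "\<And>h'. sv \<pi>1 \<pi>2 b h' \<le> B"
  shows "sv \<pi>1 \<pi>2 (a + b) h \<le> sv \<pi>1 \<pi>2 a h * B"
proof (induction a arbitrary: h)
  case 0
  show ?case
  proof (cases "cur h \<in> S")
    case True then show ?thesis using assms[of h] by simp
  qed (simp add: survp_outside)
next
  case (Suc a)
  show ?case
  proof (cases "cur h \<in> S")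
    case True
    have "sv \<pi>1 \<pi>2 (Suc a + b) h \<le> expect (cur h) (\<pi>1 h) (\<pi>2 h) (\<lambda>u v j. B * sv \<pi>1 \<pi>2 a (hext h u v j))"
      unfolding add_Suc survp_Suc[OF True] by (rule expect_mono[OF True]) (use Suc in \<open>auto simp: mult.commute\<close>)
    also have "\<dots> = sv \<pi>1 \<pi>2 (Suc a) h * B" unfolding expect_cmult survp_Suc[OF True] by simp
    finally show ?thesis .
  qed (simp add: survp_outside)
qed

lemma ecost_term_diff_le:
  assumes "\<And>j. j \<in> S \<Longrightarrow> \<bar>W j - W' j\<bar> \<le> c"
  shows "\<bar>ect W \<pi>1 \<pi>2 k h - ect W' \<pi>1 \<pi>2 k h\<bar> \<le> c * sv \<pi>1 \<pi>2 k h"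
proof (induction k arbitrary: h)
  case 0 then show ?case using assms by simp
next
  case (Suc k)
  show ?case
  proof (cases "cur h \<in> S")
    case True
    have "\<bar>ect W \<pi>1 \<pi>2 (Suc k) h - ect W' \<pi>1 \<pi>2 (Suc k) h\<bar> =
      \<bar>expect (cur h) (\<pi>1 h) (\<pi>2 h) (\<lambda>u v j. ect W \<pi>1 \<pi>2 k (hext h u v j) - ect W' \<pi>1 \<pi>2 k (hext h u v j))\<bar>"
      unfolding ecost_term_Suc[OF True] expect_diff[symmetric] by (simp only: add_diff_cancel_left)
    also have "\<dots> \<le> expect (cur h) (\<pi>1 h) (\<pi>2 h) (\<lambda>u v j. \<bar>ect W \<pi>1 \<pi>2 k (hext h u v j) - ect W' \<pi>1 \<pi>2 k (hext h u v j)\<bar>)"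
      by (rule abs_expect_le[OF True])
    also have "\<dots> \<le> expect (cur h) (\<pi>1 h) (\<pi>2 h) (\<lambda>u v j. c * sv \<pi>1 \<pi>2 k (hext h u v j))"
      by (rule expect_mono[OF True]) (use Suc in auto)
    also have "\<dots> = c * sv \<pi>1 \<pi>2 (Suc k) h" unfolding expect_cmult survp_Suc[OF True] ..
    finally show ?thesis .
  qed (simp add: ecost_term_outside survp_outside)
qed

lemma ecost_term_mono:
  assumes "\<And>j. j \<in> S \<Longrightarrow> W j \<le> W' j"
  shows "ect W \<pi>1 \<pi>2 k h \<le> ect W' \<pi>1 \<pi>2 k h"
proof (induction k arbitrary: h)
  case 0 then show ?case using assms by simp
next
  case (Suc k)
  show ?case
  proof (cases "cur h \<in> S")
    case True
    show ?thesis unfolding ecost_term_Suc[OF True] by (rule expect_mono[OF True]) (use Suc in auto)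
  qed (simp add: ecost_term_outside)
qed

lemma ecost_add_diff_le:
  assumes "\<And>h'. \<bar>ec \<pi>1 \<pi>2 b h'\<bar> \<le> B"
  shows "\<bar>ec \<pi>1 \<pi>2 (a + b) h - ec \<pi>1 \<pi>2 a h\<bar> \<le> B * sv \<pi>1 \<pi>2 a h"
proof (induction a arbitrary: h)
  case 0
  show ?case
  proof (cases "cur h \<in> S")
    case True then show ?thesis using assms[of h] by simp
  qed (simp add: ecost_outside survp_outside)
next
  case (Suc a)
  show ?case
  proof (cases "cur h \<in> S")
    case True
    have "\<bar>ec \<pi>1 \<pi>2 (Suc a + b) h - ec \<pi>1 \<pi>2 (Suc a) h\<bar> =
      \<bar>expect (cur h) (\<pi>1 h) (\<pi>2 h) (\<lambda>u v j. ec \<pi>1 \<pi>2 (a + b) (hext h u v j) - ec \<pi>1 \<pi>2 a (hext h u v j))\<bar>"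
      unfolding add_Suc ecost_Suc[OF True] expect_diff[symmetric] by (simp only: add_diff_cancel_left)
    also have "\<dots> \<le> expect (cur h) (\<pi>1 h) (\<pi>2 h) (\<lambda>u v j. \<bar>ec \<pi>1 \<pi>2 (a + b) (hext h u v j) - ec \<pi>1 \<pi>2 a (hext h u v j)\<bar>)"
      by (rule abs_expect_le[OF True])
    also have "\<dots> \<le> expect (cur h) (\<pi>1 h) (\<pi>2 h) (\<lambda>u v j. B * sv \<pi>1 \<pi>2 a (hext h u v j))"
      by (rule expect_mono[OF True]) (use Suc in auto)
    also have "\<dots> = B * sv \<pi>1 \<pi>2 (Suc a) h" unfolding expect_cmult survp_Suc[OF True] ..
    finally show ?thesis .
  qed (simp add: ecost_outside survp_outside)
qed

lemma stat_apply: "stat \<mu> h = \<mu> (cur h)" by (simp add: stat_def)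

lemma ecost_term_stat: "ect W (stat \<mu>) (stat \<nu>) k h = ect W (stat \<mu>) (stat \<nu>) k (cur h, [])"
proof (induction k arbitrary: h)
  case (Suc k)
  show ?case
  proof (cases "cur h \<in> S")
    case True
    have "\<And>u v j. ect W (stat \<mu>) (stat \<nu>) k (hext h u v j) = ect W (stat \<mu>) (stat \<nu>) k (hext (cur h, []) u v j)"
      using Suc by (metis cur_hext)
    then show ?thesis using True
      by (simp add: ecost_term_Suc stat_apply[of \<mu> h] stat_apply[of \<mu> "(cur h, [])"] stat_apply[of \<nu> h] stat_apply[of \<nu> "(cur h, [])"])
  qed (simp add: ecost_term_outside)
qed simp

lemma survp_stat: "sv (stat \<mu>) (stat \<nu>) k h = sv (stat \<mu>) (stat \<nu>) k (cur h, [])"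
proof (induction k arbitrary: h)
  case (Suc k)
  show ?case
  proof (cases "cur h \<in> S")
    case True
    have "\<And>u v j. sv (stat \<mu>) (stat \<nu>) k (hext h u v j) = sv (stat \<mu>) (stat \<nu>) k (hext (cur h, []) u v j)"
      using Suc by (metis cur_hext)
    then show ?thesis using True
      by (simp add: survp_Suc stat_apply[of \<mu> h] stat_apply[of \<mu> "(cur h, [])"] stat_apply[of \<nu> h] stat_apply[of \<nu> "(cur h, [])"])
  qed (simp add: survp_outside)
qed simp

lemma ecost_stat: "ec (stat \<mu>) (stat \<nu>) k h = ec (stat \<mu>) (stat \<nu>) k (cur h, [])"
  using ecost_term_stat ecost_eq_ecost_term_0 by metis

definition qfactor :: "(nat \<Rightarrow> real) \<Rightarrow> nat \<Rightarrow> 'u \<Rightarrow> 'v \<Rightarrow> real" where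
  "qfactor X i u v = gexp n p gh i u v + (\<Sum>j\<in>S. p i j u v * X j)"

definition T_pair :: "(nat \<Rightarrow> 'u pmf) \<Rightarrow> (nat \<Rightarrow> 'v pmf) \<Rightarrow> (nat \<Rightarrow> real) \<Rightarrow> nat \<Rightarrow> real" where
  "T_pair \<mu> \<nu> X i = mixed_payoff (U i) (V i) (qfactor X i) (\<mu> i) (\<nu> i)"

definition T_I :: "(nat \<Rightarrow> 'u pmf) \<Rightarrow> (nat \<Rightarrow> real) \<Rightarrow> nat \<Rightarrow> real" where
  "T_I \<mu> X i = sup_payoff (U i) (V i) (qfactor X i) (\<mu> i)"

definition T_II :: "(nat \<Rightarrow> 'v pmf) \<Rightarrow> (nat \<Rightarrow> real) \<Rightarrow> nat \<Rightarrow> real" where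
  "T_II \<nu> X i = inf_payoff (U i) (V i) (qfactor X i) (\<nu> i)"

definition T_game :: "(nat \<Rightarrow> real) \<Rightarrow> nat \<Rightarrow> real" where
  "T_game X i = (INF \<rho>\<in>pmfs_on (U i). sup_payoff (U i) (V i) (qfactor X i) \<rho>)"

definition l1norm :: "(nat \<Rightarrow> real) \<Rightarrow> real" where
  "l1norm X = (\<Sum>j\<in>S. \<bar>X j\<bar>)"

lemma l1norm_nonneg: "0 \<le> l1norm X"
  by (simp add: l1norm_def sum_nonneg)

lemma abs_le_l1norm: "j \<in> S \<Longrightarrow> \<bar>X j\<bar> \<le> l1norm X"
  unfolding l1norm_def by (rule member_le_sum) (auto simp: finite_S)

lemma expect_eq_mixed_payoff:
  assumes "i \<in> S"
  shows "expect i \<rho> \<sigma> (\<lambda>u v j. gh i u v j + (if j \<in> S then X j else 0))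
    = mixed_payoff (U i) (V i) (qfactor X i) \<rho> \<sigma>"
proof -
  have "(\<Sum>j\<in>{0..n}. p i j u v * (gh i u v j + (if j \<in> S then X j else 0))) = qfactor X i u v" for u v
  proof -
    have "(\<Sum>j\<in>{0..n}. p i j u v * (if j \<in> S then X j else 0)) = (\<Sum>j\<in>{0..n}. if j \<in> S then p i j u v * X j else 0)"
      by (rule sum.cong) auto
    also have "\<dots> = (\<Sum>j\<in>S. p i j u v * X j)"
      using S_subset by (simp add: sum.inter_restrict[symmetric] Int_absorb1)
    finally show ?thesis unfolding qfactor_def gexp_def by (simp add: algebra_simps sum.distrib)
  qed
  thus ?thesis unfolding expect_def mixed_payoff_def by simp
qed

lemma ecost_term_Suc_le:
  assumes "cur h = i" "i \<in> S"
    and "\<And>u v j. u \<in> U i \<Longrightarrow> v \<in> V i \<Longrightarrow> j \<in> S \<Longrightarrow> ect W \<pi>1 \<pi>2 k (hext h u v j) \<le> X j"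
  shows "ect W \<pi>1 \<pi>2 (Suc k) h \<le> mixed_payoff (U i) (V i) (qfactor X i) (\<pi>1 h) (\<pi>2 h)"
  unfolding expect_eq_mixed_payoff[OF assms(2), symmetric] ecost_term_Suc[OF assms(2)[folded assms(1)]] assms(1)
  by (rule expect_mono[OF assms(2)]) (use assms(3) in \<open>auto simp: ecost_term_outside\<close>)

lemma ecost_term_Suc_ge:
  assumes "cur h = i" "i \<in> S"
    and "\<And>u v j. u \<in> U i \<Longrightarrow> v \<in> V i \<Longrightarrow> j \<in> S \<Longrightarrow> X j \<le> ect W \<pi>1 \<pi>2 k (hext h u v j)"
  shows "mixed_payoff (U i) (V i) (qfactor X i) (\<pi>1 h) (\<pi>2 h) \<le> ect W \<pi>1 \<pi>2 (Suc k) h"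
  unfolding expect_eq_mixed_payoff[OF assms(2), symmetric] ecost_term_Suc[OF assms(2)[folded assms(1)]] assms(1)
  by (rule expect_mono[OF assms(2)]) (use assms(3) in \<open>auto simp: ecost_term_outside\<close>)

lemma qfactor_le_add:
  assumes "i \<in> S" "u \<in> U i" "v \<in> V i" "0 \<le> d" "\<And>j. j \<in> S \<Longrightarrow> X j \<le> Y j + d"
  shows "qfactor X i u v \<le> qfactor Y i u v + d"
proof -
  have "qfactor X i u v \<le> qfactor (\<lambda>j. Y j + d) i u v"
    unfolding qfactor_def using assms S_subset p_nonneg by (auto intro!: sum_mono mult_left_mono)
  also have "\<dots> = qfactor Y i u v + d * (\<Sum>j\<in>S. p i j u v)"
    unfolding qfactor_def by (simp add: algebra_simps sum.distrib sum_distrib_left)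
  also have "\<dots> \<le> qfactor Y i u v + d"
    using p_sum_S_le_1[OF assms(1-3)] assms(4) mult_left_le by auto
  finally show ?thesis .
qed

lemma qfactor_cong: "(\<And>j. j \<in> S \<Longrightarrow> X j = Y j) \<Longrightarrow> qfactor X i = qfactor Y i"
  unfolding qfactor_def by (intro ext arg_cong2[where f="(+)"] refl sum.cong) auto

lemma T_I_le_add:
  assumes "i \<in> S" "\<mu> i \<in> pmfs_on (U i)" "0 \<le> d" "\<And>j. j \<in> S \<Longrightarrow> X j \<le> Y j + d"
  shows "T_I \<mu> X i \<le> T_I \<mu> Y i + d"
  unfolding T_I_def
  using assms by (intro sup_payoff_le_add finite_U finite_V V_nonempty qfactor_le_add)

lemma T_pair_le_T_I: "i \<in> S \<Longrightarrow> \<nu> i \<in> pmfs_on (V i) \<Longrightarrow> T_pair \<mu> \<nu> X i \<le> T_I \<mu> X i"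
  unfolding T_pair_def T_I_def by (rule mixed_payoff_le_sup_payoff[OF finite_V])

lemma T_II_le_T_pair: "i \<in> S \<Longrightarrow> \<mu> i \<in> pmfs_on (U i) \<Longrightarrow> T_II \<nu> X i \<le> T_pair \<mu> \<nu> X i"
  unfolding T_pair_def T_II_def by (rule inf_payoff_le_mixed_payoff[OF finite_U])

lemma T_I_attained:
  assumes "i \<in> S"
  obtains v where "v \<in> V i" "T_I \<mu> X i = T_pair \<mu> (\<lambda>_. return_pmf v) X i"
  using sup_payoff_attained[OF finite_V[OF assms] V_nonempty[OF assms]]
  unfolding T_I_def T_pair_def by metis

lemma stat_in_Pi1: "\<mu> \<in> SR n U \<Longrightarrow> stat \<mu> \<in> Pi1 n U"
  by (simp add: SR_def Pi1_def stat_def)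

lemma stat_in_Pi2: "\<nu> \<in> SR n V \<Longrightarrow> stat \<nu> \<in> Pi2 n V"
  by (simp add: SR_def Pi2_def stat_def)

lemma SR_in_pmfs_on: "\<mu> \<in> SR n W \<Longrightarrow> i \<in> S \<Longrightarrow> \<mu> i \<in> pmfs_on (W i)"
  by (simp add: SR_def pmfs_on_def)

lemma Pi2_in_pmfs_on: "\<pi>2 \<in> Pi2 n V \<Longrightarrow> cur h \<in> S \<Longrightarrow> \<pi>2 h \<in> pmfs_on (V (cur h))"
  unfolding Pi2_def pmfs_on_def by blast

lemma ecost_term_ge_subsolution:
  assumes "\<And>i. i \<in> S \<Longrightarrow> X i \<le> T_pair \<mu> \<nu> X i"
  shows "cur h \<in> S \<Longrightarrow> X (cur h) \<le> ect X (stat \<mu>) (stat \<nu>) k h"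
proof (induction k arbitrary: h)
  case (Suc k)
  have "X (cur h) \<le> T_pair \<mu> \<nu> X (cur h)" using assms Suc.prems by blast
  also have "\<dots> = mixed_payoff (U (cur h)) (V (cur h)) (qfactor X (cur h)) (stat \<mu> h) (stat \<nu> h)"
    by (simp add: T_pair_def stat_apply)
  also have "\<dots> \<le> ect X (stat \<mu>) (stat \<nu>) (Suc k) h"
    by (rule ecost_term_Suc_ge[OF refl Suc.prems]) (metis Suc.IH cur_hext)
  finally show ?case .
qed simp

lemma ecost_term_le_supersolution:
  assumes "\<pi>2 \<in> Pi2 n V" "\<And>i. i \<in> S \<Longrightarrow> T_I \<mu> X i \<le> X i"
  shows "cur h \<in> S \<Longrightarrow> ect X (stat \<mu>) \<pi>2 k h \<le> X (cur h)"
proof (induction k arbitrary: h)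
  case (Suc k)
  have "ect X (stat \<mu>) \<pi>2 (Suc k) h \<le> mixed_payoff (U (cur h)) (V (cur h)) (qfactor X (cur h)) (stat \<mu> h) (\<pi>2 h)"
    by (rule ecost_term_Suc_le[OF refl Suc.prems]) (metis Suc.IH cur_hext)
  also have "\<dots> \<le> T_I \<mu> X (cur h)"
    unfolding stat_apply T_I_def
    by (rule mixed_payoff_le_sup_payoff[OF finite_V[OF Suc.prems]])
      (rule Pi2_in_pmfs_on[OF assms(1) Suc.prems])
  also have "\<dots> \<le> X (cur h)" using assms(2) Suc.prems by blast
  finally show ?case .
qed simp

lemma ecost_term_le_T_I_iterate:
  assumes "\<pi>2 \<in> Pi2 n V"
  shows "cur h \<in> S \<Longrightarrow> ect X (stat \<mu>) \<pi>2 k h \<le> (T_I \<mu> ^^ k) X (cur h)"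
proof (induction k arbitrary: h)
  case (Suc k)
  have "ect X (stat \<mu>) \<pi>2 (Suc k) h
      \<le> mixed_payoff (U (cur h)) (V (cur h)) (qfactor ((T_I \<mu> ^^ k) X) (cur h)) (stat \<mu> h) (\<pi>2 h)"
    by (rule ecost_term_Suc_le[OF refl Suc.prems]) (metis Suc.IH cur_hext)
  also have "\<dots> \<le> T_I \<mu> ((T_I \<mu> ^^ k) X) (cur h)"
    unfolding stat_apply T_I_def
    by (rule mixed_payoff_le_sup_payoff[OF finite_V[OF Suc.prems]])
      (rule Pi2_in_pmfs_on[OF assms(1) Suc.prems])
  finally show ?case by simp
qed simp

lemma ecost_term_close: "\<bar>ec \<pi>1 \<pi>2 k h - ect X \<pi>1 \<pi>2 k h\<bar> \<le> l1norm X * sv \<pi>1 \<pi>2 k h"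
  using ecost_term_diff_le[of "\<lambda>_. 0" X "l1norm X" \<pi>1 \<pi>2 k h] abs_le_l1norm[of _ X]
  by (simp add: ecost_eq_ecost_term_0)

lemma ecost_ge_subsolution:
  assumes "\<And>i. i \<in> S \<Longrightarrow> X i \<le> T_pair \<mu> \<nu> X i" "i \<in> S"
  shows "X i - l1norm X * sv (stat \<mu>) (stat \<nu>) k (i, []) \<le> ec (stat \<mu>) (stat \<nu>) k (i, [])"
  using ecost_term_ge_subsolution[OF assms(1), of "(i, [])" k]
    ecost_term_close[of "stat \<mu>" "stat \<nu>" k "(i, [])" X] assms(2)
  by (simp add: abs_le_iff)

lemma ecost_le_supersolution:
  assumes "\<pi>2 \<in> Pi2 n V" "\<And>i. i \<in> S \<Longrightarrow> T_I \<mu> Y i \<le> Y i" "i \<in> S"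
  shows "ec (stat \<mu>) \<pi>2 k (i, []) \<le> Y i + l1norm Y * sv (stat \<mu>) \<pi>2 k (i, [])"
  using ecost_term_le_supersolution[OF assms(1,2), of "(i, [])" k]
    ecost_term_close[of "stat \<mu>" \<pi>2 k "(i, [])" Y] assms(3)
  by (simp add: abs_le_iff)

lemma survp_eventually_less:
  assumes "\<not> prolonging n U V p \<pi>1 \<pi>2" "i \<in> S" "0 < e"
  shows "\<exists>N. \<forall>k\<ge>N. sv \<pi>1 \<pi>2 k (i, []) < e"
proof -
  obtain t where "sv \<pi>1 \<pi>2 t (i, []) < e" using assms unfolding prolonging_def by (auto simp: not_le)
  thus ?thesis using survp_antimono[of t _ \<pi>1 \<pi>2 "(i, [])"] by (intro exI[of _ t]) force
qed

lemma survp_tendsto_0: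
  assumes "\<not> prolonging n U V p \<pi>1 \<pi>2" "i \<in> S"
  shows "(\<lambda>k. sv \<pi>1 \<pi>2 k (i, [])) \<longlonglongrightarrow> 0"
proof (rule LIMSEQ_I)
  fix r :: real assume "0 < r"
  then obtain N where "\<forall>k\<ge>N. sv \<pi>1 \<pi>2 k (i, []) < r" using survp_eventually_less[OF assms] by blast
  thus "\<exists>N. \<forall>k\<ge>N. norm (sv \<pi>1 \<pi>2 k (i, []) - 0) < r" using survp_nonneg by (auto intro!: exI[of _ N])
qed

lemma le_of_ecost_bounds:
  assumes "\<not> prolonging n U V p \<pi>1 \<pi>2" "i \<in> S"
    and "\<And>k. a - A * sv \<pi>1 \<pi>2 k (i, []) \<le> ec \<pi>1 \<pi>2 k (i, [])"
    and "\<And>k. ec \<pi>1 \<pi>2 k (i, []) \<le> b + B * sv \<pi>1 \<pi>2 k (i, [])"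
  shows "a \<le> b"
proof -
  have "(\<lambda>k. (A + B) * sv \<pi>1 \<pi>2 k (i, [])) \<longlonglongrightarrow> (A + B) * 0"
    by (intro tendsto_mult_left survp_tendsto_0[OF assms(1,2)])
  moreover have "a - b \<le> (A + B) * sv \<pi>1 \<pi>2 k (i, [])" for k
    using assms(3,4)[of k] by (simp add: algebra_simps)
  ultimately have "a - b \<le> (A + B) * 0" by (intro LIMSEQ_le_const) auto
  thus ?thesis by simp
qed

lemma subsolution_le_supersolution:
  assumes "\<nu> \<in> SR n V" "\<not> prolonging n U V p (stat \<mu>) (stat \<nu>)"
    and "\<And>i. i \<in> S \<Longrightarrow> X i \<le> T_pair \<mu> \<nu> X i" "\<And>i. i \<in> S \<Longrightarrow> T_I \<mu> Y i \<le> Y i" "i \<in> S"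
  shows "X i \<le> Y i"
  by (rule le_of_ecost_bounds[OF assms(2,5) ecost_ge_subsolution[OF assms(3,5)]
        ecost_le_supersolution[OF stat_in_Pi2[OF assms(1)] assms(4,5)]])

definition cost_bound :: real where
  "cost_bound = (\<Sum>i\<in>S. \<Sum>u\<in>U i. \<Sum>v\<in>V i. \<Sum>j\<in>{0..n}. \<bar>gh i u v j\<bar>)"

lemma cost_bound_nonneg: "0 \<le> cost_bound"
  unfolding cost_bound_def by (auto intro!: sum_nonneg)

lemma abs_gh_le_cost_bound:
  assumes "i \<in> S" "u \<in> U i" "v \<in> V i" "j \<in> {0..n}"
  shows "\<bar>gh i u v j\<bar> \<le> cost_bound"
proof -
  have "\<bar>gh i u v j\<bar> \<le> (\<Sum>j\<in>{0..n}. \<bar>gh i u v j\<bar>)" using assms by (intro member_le_sum) auto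
  also have "\<dots> \<le> (\<Sum>v\<in>V i. \<Sum>j\<in>{0..n}. \<bar>gh i u v j\<bar>)"
    using assms finite_V[OF assms(1)]
    by (intro member_le_sum[of v "V i" "\<lambda>v. \<Sum>j\<in>{0..n}. \<bar>gh i u v j\<bar>"]) (auto intro: sum_nonneg)
  also have "\<dots> \<le> (\<Sum>u\<in>U i. \<Sum>v\<in>V i. \<Sum>j\<in>{0..n}. \<bar>gh i u v j\<bar>)"
    using assms finite_U[OF assms(1)]
    by (intro member_le_sum[of u "U i" "\<lambda>u. \<Sum>v\<in>V i. \<Sum>j\<in>{0..n}. \<bar>gh i u v j\<bar>"]) (auto intro!: sum_nonneg)
  also have "\<dots> \<le> cost_bound" unfolding cost_bound_def
    using assms finite_S
    by (intro member_le_sum[of i S "\<lambda>i. \<Sum>u\<in>U i. \<Sum>v\<in>V i. \<Sum>j\<in>{0..n}. \<bar>gh i u v j\<bar>"]) (auto intro!: sum_nonneg)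
  finally show ?thesis .
qed

lemma abs_ecost_linear: "\<bar>ec \<pi>1 \<pi>2 k h\<bar> \<le> cost_bound * k"
proof (induction k arbitrary: h)
  case (Suc k)
  have one_step: "\<bar>ec \<pi>1 \<pi>2 (Suc 0) h'\<bar> \<le> cost_bound" for h'
  proof (cases "cur h' \<in> S")
    case True
    have "\<bar>ec \<pi>1 \<pi>2 (Suc 0) h'\<bar> \<le> expect (cur h') (\<pi>1 h') (\<pi>2 h') (\<lambda>u v j. \<bar>gh (cur h') u v j\<bar>)"
      using abs_expect_le[OF True] by (simp add: ecost_Suc[OF True])
    also have "\<dots> \<le> expect (cur h') (\<pi>1 h') (\<pi>2 h') (\<lambda>u v j. cost_bound)"
      by (rule expect_mono[OF True]) (use abs_gh_le_cost_bound True in auto)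
    also have "\<dots> \<le> cost_bound" by (rule expect_const_le[OF True cost_bound_nonneg])
    finally show ?thesis .
  qed (simp add: ecost_outside cost_bound_nonneg)
  have "\<bar>ec \<pi>1 \<pi>2 (k + Suc 0) h - ec \<pi>1 \<pi>2 k h\<bar> \<le> cost_bound * sv \<pi>1 \<pi>2 k h"
    by (rule ecost_add_diff_le[OF one_step])
  also have "\<dots> \<le> cost_bound" using survp_le_1[of \<pi>1 \<pi>2 k h] cost_bound_nonneg by (simp add: mult_left_le)
  finally show ?case using Suc[of h] by (simp add: algebra_simps abs_le_iff)
qed simp

lemma survp_mult_le_power:
  assumes "\<And>h. sv \<pi>1 \<pi>2 K h \<le> 1/2"
  shows "sv \<pi>1 \<pi>2 (q * K) h \<le> (1/2) ^ q"
proof (induction q arbitrary: h)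
  case 0 then show ?case using survp_le_1 by simp
next
  case (Suc q)
  have "sv \<pi>1 \<pi>2 (K + q * K) h \<le> sv \<pi>1 \<pi>2 K h * (1/2) ^ q"
    by (rule survp_add_le) (use Suc in auto)
  also have "\<dots> \<le> 1/2 * (1/2) ^ q" using assms[of h] by (intro mult_right_mono) auto
  finally show ?case by simp
qed

text \<open>Blocks of \<open>K\<close> stages each halve the survival probability, so the partial costs are
  bounded by a geometric series.\<close>

lemma abs_ecost_bounded:
  assumes K: "1 \<le> K" and half: "\<And>h. sv \<pi>1 \<pi>2 K h \<le> 1/2"
  shows "\<bar>ec \<pi>1 \<pi>2 m h\<bar> \<le> 3 * cost_bound * K"
proof -
  define G where "G = cost_bound * K"
  have G0: "0 \<le> G" unfolding G_def by (simp add: cost_bound_nonneg)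
  have short: "\<bar>ec \<pi>1 \<pi>2 r h'\<bar> \<le> G" if "r \<le> K" for r h'
    using abs_ecost_linear[of \<pi>1 \<pi>2 r h'] cost_bound_nonneg that unfolding G_def
    by (meson mult_left_mono of_nat_le_iff order_trans)
  have blocks: "\<bar>ec \<pi>1 \<pi>2 (q * K) h\<bar> \<le> G * (2 - 2 * (1/2) ^ q)" for q
  proof (induction q)
    case (Suc q)
    have "\<bar>ec \<pi>1 \<pi>2 (q * K + K) h - ec \<pi>1 \<pi>2 (q * K) h\<bar> \<le> G * sv \<pi>1 \<pi>2 (q * K) h"
      by (rule ecost_add_diff_le[OF short[OF order_refl]])
    also have "\<dots> \<le> G * (1/2) ^ q" using survp_mult_le_power[OF half] G0 by (intro mult_left_mono) auto
    finally have "\<bar>ec \<pi>1 \<pi>2 (q * K + K) h\<bar> \<le> G * (2 - 2 * (1/2) ^ q) + G * (1/2) ^ q"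
      using Suc by (simp add: abs_le_iff)
    also have "\<dots> = G * (2 - 2 * (1/2) ^ Suc q)" by (simp add: algebra_simps)
    finally show ?case by (simp add: add.commute)
  qed simp
  define q r where "q = m div K" and "r = m mod K"
  have m: "m = q * K + r" by (simp add: q_def r_def)
  have "\<bar>ec \<pi>1 \<pi>2 (q * K + r) h - ec \<pi>1 \<pi>2 (q * K) h\<bar> \<le> G * sv \<pi>1 \<pi>2 (q * K) h"
    by (rule ecost_add_diff_le[OF short]) (use K in \<open>simp add: r_def less_imp_le\<close>)
  also have "\<dots> \<le> G" using survp_le_1 G0 by (simp add: mult_left_le)
  finally have "\<bar>ec \<pi>1 \<pi>2 m h - ec \<pi>1 \<pi>2 (q * K) h\<bar> \<le> G" unfolding m .
  moreover have "G * (2 - 2 * (1/2) ^ q) \<le> G * 2" using G0 by (intro mult_left_mono) auto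
  ultimately show ?thesis using blocks[of q] unfolding G_def by (simp add: abs_le_iff)
qed

definition proper_pair :: "(nat \<Rightarrow> 'u pmf) \<Rightarrow> (nat \<Rightarrow> 'v pmf) \<Rightarrow> bool" where
  "proper_pair \<mu> \<nu> \<longleftrightarrow> \<mu> \<in> SR n U \<and> \<nu> \<in> SR n V \<and> \<not> prolonging n U V p (stat \<mu>) (stat \<nu>)"

lemma proper_pair_survp_half:
  assumes "proper_pair \<mu> \<nu>"
  obtains K where "1 \<le> K" "\<And>h. sv (stat \<mu>) (stat \<nu>) K h \<le> 1/2"
proof -
  have np: "\<not> prolonging n U V p (stat \<mu>) (stat \<nu>)" using assms by (simp add: proper_pair_def)
  have "\<forall>\<^sub>F k in sequentially. \<forall>i\<in>S. sv (stat \<mu>) (stat \<nu>) k (i, []) < 1/2"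
    using survp_eventually_less[OF np _ half_gt_zero[OF zero_less_one]]
    by (intro eventually_ball_finite[OF finite_S] ballI) (simp add: eventually_sequentially)
  then obtain N where N: "\<And>k i. N \<le> k \<Longrightarrow> i \<in> S \<Longrightarrow> sv (stat \<mu>) (stat \<nu>) k (i, []) < 1/2"
    unfolding eventually_sequentially by blast
  have "sv (stat \<mu>) (stat \<nu>) (Suc N) h \<le> 1/2" for h
  proof (cases "cur h \<in> S")
    case True
    then show ?thesis using N[of "Suc N" "cur h"] survp_stat[of \<mu> \<nu> "Suc N" h] by simp
  qed (simp add: survp_outside)
  thus ?thesis using that[of "Suc N"] by simp
qed

lemma proper_pair_ecost_bounded:
  assumes "proper_pair \<mu> \<nu>"
  obtains B where "\<And>m h. \<bar>ec (stat \<mu>) (stat \<nu>) m h\<bar> \<le> B"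
  using proper_pair_survp_half[OF assms] abs_ecost_bounded by metis

lemma proper_pair_ecost_convergent:
  assumes pp: "proper_pair \<mu> \<nu>" and i: "i \<in> S"
  shows "convergent (\<lambda>k. ec (stat \<mu>) (stat \<nu>) k (i, []))"
proof -
  obtain B where B: "\<And>m h. \<bar>ec (stat \<mu>) (stat \<nu>) m h\<bar> \<le> B" using proper_pair_ecost_bounded[OF pp] by blast
  have np: "\<not> prolonging n U V p (stat \<mu>) (stat \<nu>)" using pp by (simp add: proper_pair_def)
  have tail: "\<bar>ec (stat \<mu>) (stat \<nu>) m (i, []) - ec (stat \<mu>) (stat \<nu>) N (i, [])\<bar> \<le> B * sv (stat \<mu>) (stat \<nu>) N (i, [])"
    if "N \<le> m" for m N
    using ecost_add_diff_le[OF B, of N "m - N" "(i, [])"] that by simp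
  have "(\<lambda>N. B * sv (stat \<mu>) (stat \<nu>) N (i, [])) \<longlonglongrightarrow> B * 0"
    by (intro tendsto_mult_left survp_tendsto_0[OF np i])
  show ?thesis unfolding Cauchy_convergent_iff[symmetric]
  proof (rule CauchyI)
    fix e :: real assume e: "0 < e"
    obtain N where N: "B * sv (stat \<mu>) (stat \<nu>) N (i, []) < e / 2"
      using order_tendstoD(2)[OF \<open>_ \<longlonglongrightarrow> B * 0\<close>, of "e / 2"] e
      by (auto simp: eventually_sequentially)
    show "\<exists>M. \<forall>m\<ge>M. \<forall>m'\<ge>M. norm (ec (stat \<mu>) (stat \<nu>) m (i, []) - ec (stat \<mu>) (stat \<nu>) m' (i, [])) < e"
    proof (intro exI[of _ N] allI impI)
      fix m m' assume "N \<le> m" "N \<le> m'"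
      thus "norm (ec (stat \<mu>) (stat \<nu>) m (i, []) - ec (stat \<mu>) (stat \<nu>) m' (i, [])) < e"
        using tail[of N m] tail[of N m'] N by (simp add: abs_le_iff) linarith
    qed
  qed
qed

definition pair_cost :: "(nat \<Rightarrow> 'u pmf) \<Rightarrow> (nat \<Rightarrow> 'v pmf) \<Rightarrow> nat \<Rightarrow> real" where
  "pair_cost \<mu> \<nu> i = lim (\<lambda>k. ec (stat \<mu>) (stat \<nu>) k (i, []))"

lemma pair_cost_tendsto:
  "proper_pair \<mu> \<nu> \<Longrightarrow> i \<in> S \<Longrightarrow> (\<lambda>k. ec (stat \<mu>) (stat \<nu>) k (i, [])) \<longlonglongrightarrow> pair_cost \<mu> \<nu> i"
  unfolding pair_cost_def using proper_pair_ecost_convergent convergent_LIMSEQ_iff by blast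

lemma T_pair_pair_cost:
  assumes pp: "proper_pair \<mu> \<nu>" and i: "i \<in> S"
  shows "T_pair \<mu> \<nu> (pair_cost \<mu> \<nu>) i = pair_cost \<mu> \<nu> i"
proof -
  define Z where "Z k j = (if j \<in> S then ec (stat \<mu>) (stat \<nu>) k (j, []) else 0)" for k j
  have step: "ec (stat \<mu>) (stat \<nu>) (Suc k) (i, []) = expect i (\<mu> i) (\<nu> i) (\<lambda>u v j. gh i u v j + Z k j)" for k
  proof -
    have "ec (stat \<mu>) (stat \<nu>) k (hext (i, []) u v j) = Z k j" for u v j
      using ecost_stat[of \<mu> \<nu> k "hext (i, []) u v j"] by (simp add: Z_def ecost_outside)
    thus ?thesis using ecost_Suc[of "(i, [])"] i by (simp add: stat_apply)
  qed
  have "(\<lambda>k. expect i (\<mu> i) (\<nu> i) (\<lambda>u v j. gh i u v j + Z k j)) \<longlonglongrightarrow>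
        expect i (\<mu> i) (\<nu> i) (\<lambda>u v j. gh i u v j + (if j \<in> S then pair_cost \<mu> \<nu> j else 0))"
    unfolding expect_def
  proof (intro tendsto_sum tendsto_mult tendsto_const tendsto_add)
    fix j
    show "(\<lambda>k. Z k j) \<longlonglongrightarrow> (if j \<in> S then pair_cost \<mu> \<nu> j else 0)"
      by (cases "j \<in> S") (auto simp: Z_def intro: pair_cost_tendsto[OF pp])
  qed
  hence "(\<lambda>k. ec (stat \<mu>) (stat \<nu>) (Suc k) (i, [])) \<longlonglongrightarrow> T_pair \<mu> \<nu> (pair_cost \<mu> \<nu>) i"
    unfolding step expect_eq_mixed_payoff[OF i] T_pair_def .
  moreover have "(\<lambda>k. ec (stat \<mu>) (stat \<nu>) (Suc k) (i, [])) \<longlonglongrightarrow> pair_cost \<mu> \<nu> i"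
    by (rule LIMSEQ_Suc[OF pair_cost_tendsto[OF pp i]])
  ultimately show ?thesis by (rule LIMSEQ_unique)
qed

lemma T_pair_le_ecost_term_Suc:
  assumes X: "\<And>i. i \<in> S \<Longrightarrow> X i \<le> T_pair \<mu> \<nu> X i" and h: "cur h \<in> S"
  shows "T_pair \<mu> \<nu> X (cur h) \<le> ect X (stat \<mu>) (stat \<nu>) (Suc k) h"
proof -
  have "T_pair \<mu> \<nu> X (cur h) = mixed_payoff (U (cur h)) (V (cur h)) (qfactor X (cur h)) (stat \<mu> h) (stat \<nu> h)"
    by (simp add: T_pair_def stat_apply)
  also have "\<dots> \<le> ect X (stat \<mu>) (stat \<nu>) (Suc k) h"
    by (rule ecost_term_Suc_ge[OF refl h]) (use ecost_term_ge_subsolution[OF X] in \<open>metis cur_hext\<close>)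
  finally show ?thesis .
qed

lemma T_pair_subsolution_le_pair_cost:
  assumes pp: "proper_pair \<mu> \<nu>" and X: "\<And>i. i \<in> S \<Longrightarrow> X i \<le> T_pair \<mu> \<nu> X i" and i: "i \<in> S"
  shows "T_pair \<mu> \<nu> X i \<le> pair_cost \<mu> \<nu> i"
proof -
  have np: "\<not> prolonging n U V p (stat \<mu>) (stat \<nu>)" using pp by (simp add: proper_pair_def)
  have lower: "T_pair \<mu> \<nu> X i \<le> ec (stat \<mu>) (stat \<nu>) (Suc k) (i, []) + l1norm X * sv (stat \<mu>) (stat \<nu>) (Suc k) (i, [])" for k
  proof -
    have "T_pair \<mu> \<nu> X i \<le> ect X (stat \<mu>) (stat \<nu>) (Suc k) (i, [])"
      using T_pair_le_ecost_term_Suc[OF X, of "(i, [])"] i by simp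
    thus ?thesis using ecost_term_close[of "stat \<mu>" "stat \<nu>" "Suc k" "(i, [])" X] by (simp add: abs_le_iff)
  qed
  have lim: "(\<lambda>k. ec (stat \<mu>) (stat \<nu>) (Suc k) (i, []) + l1norm X * sv (stat \<mu>) (stat \<nu>) (Suc k) (i, []))
      \<longlonglongrightarrow> pair_cost \<mu> \<nu> i + l1norm X * 0"
    by (intro tendsto_add tendsto_mult tendsto_const LIMSEQ_Suc pair_cost_tendsto[OF pp i] survp_tendsto_0[OF np i])
  have "T_pair \<mu> \<nu> X i \<le> pair_cost \<mu> \<nu> i + l1norm X * 0"
    using lower by (intro LIMSEQ_le_const[OF lim]) auto
  thus ?thesis by simp
qed

lemma ecost_bounded_below_of_subsolution:
  assumes "\<And>i. i \<in> S \<Longrightarrow> X i \<le> T_pair \<mu> \<nu> X i"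
  shows "\<exists>c. \<forall>k. \<forall>i\<in>S. c \<le> ec (stat \<mu>) (stat \<nu>) k (i, [])"
proof (intro exI allI ballI)
  fix k i assume i: "i \<in> S"
  have "l1norm X * sv (stat \<mu>) (stat \<nu>) k (i, []) \<le> l1norm X"
    using survp_le_1 survp_nonneg l1norm_nonneg by (simp add: mult_left_le)
  thus "- 2 * l1norm X \<le> ec (stat \<mu>) (stat \<nu>) k (i, [])"
    using ecost_ge_subsolution[OF assms i, of k] abs_le_l1norm[OF i, of X] by (simp add: abs_le_iff)
qed

definition pure :: "(nat \<Rightarrow> 'a) \<Rightarrow> nat \<Rightarrow> 'a pmf" where
  "pure f = (\<lambda>i. return_pmf (f i))"

lemma pure_in_SR: "f \<in> PiE S W \<Longrightarrow> pure f \<in> SR n W"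
  by (auto simp: pure_def SR_def PiE_def)

lemma T_I_greedy:
  assumes "f \<in> PiE S V"
  shows "\<exists>g\<in>PiE S V. \<forall>i\<in>S. T_pair \<mu> (pure g) X i = (if C i then T_I \<mu> X i else T_pair \<mu> (pure f) X i)"
proof -
  have "\<exists>v\<in>V i. T_I \<mu> X i = T_pair \<mu> (\<lambda>_. return_pmf v) X i" if "i \<in> S" for i
    using T_I_attained[OF that] by blast
  then obtain a where a: "\<And>i. i \<in> S \<Longrightarrow> a i \<in> V i"
    "\<And>i. i \<in> S \<Longrightarrow> T_I \<mu> X i = T_pair \<mu> (\<lambda>_. return_pmf (a i)) X i" by metis
  define g where "g i = (if i \<in> S then (if C i then a i else f i) else undefined)" for i
  have "g \<in> PiE S V" using a(1) assms by (auto simp: g_def PiE_def extensional_def)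
  moreover have "\<forall>i\<in>S. T_pair \<mu> (pure g) X i = (if C i then T_I \<mu> X i else T_pair \<mu> (pure f) X i)"
    using a(2) by (auto simp: T_pair_def pure_def g_def)
  ultimately show ?thesis by blast
qed

text \<open>Policy iteration for player II against a fixed \<open>\<mu>\<close>: switching to a pure best reply where
  it strictly improves keeps the pair proper and does not decrease the total cost anywhere.\<close>

lemma pair_cost_improvement:
  assumes \<mu>: "\<mu> \<in> SR n U"
    and H: "\<And>\<nu>. \<nu> \<in> SR n V \<Longrightarrow> (\<exists>c. \<forall>k. \<forall>i\<in>S. c \<le> ec (stat \<mu>) (stat \<nu>) k (i, [])) \<Longrightarrow>
              \<not> prolonging n U V p (stat \<mu>) (stat \<nu>)"
    and f: "f \<in> PiE S V" "proper_pair \<mu> (pure f)"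
    and i0: "i0 \<in> S" "pair_cost \<mu> (pure f) i0 < T_I \<mu> (pair_cost \<mu> (pure f)) i0"
  obtains g where "g \<in> PiE S V" "proper_pair \<mu> (pure g)"
    "\<And>i. i \<in> S \<Longrightarrow> pair_cost \<mu> (pure f) i \<le> pair_cost \<mu> (pure g) i"
    "pair_cost \<mu> (pure f) i0 < pair_cost \<mu> (pure g) i0"
proof -
  define W where "W = pair_cost \<mu> (pure f)"
  obtain g where g: "g \<in> PiE S V"
    "\<forall>i\<in>S. T_pair \<mu> (pure g) W i = (if W i < T_I \<mu> W i then T_I \<mu> W i else T_pair \<mu> (pure f) W i)"
    using T_I_greedy[OF f(1), of \<mu> W "\<lambda>i. W i < T_I \<mu> W i"] by blast
  have sub: "W i \<le> T_pair \<mu> (pure g) W i" if "i \<in> S" for i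
    using g(2) T_pair_pair_cost[OF f(2) that] that by (auto simp: W_def not_less)
  have pg: "proper_pair \<mu> (pure g)"
    using H[OF pure_in_SR[OF g(1)] ecost_bounded_below_of_subsolution[OF sub]] \<mu> pure_in_SR[OF g(1)]
    by (simp add: proper_pair_def)
  have "W i \<le> pair_cost \<mu> (pure g) i" if "i \<in> S" for i
    using sub[OF that] T_pair_subsolution_le_pair_cost[OF pg sub that] by linarith
  moreover have "W i0 < pair_cost \<mu> (pure g) i0"
    using g(2) i0 T_pair_subsolution_le_pair_cost[OF pg sub i0(1)] by (auto simp: W_def)
  ultimately show ?thesis using that g(1) pg unfolding W_def by blast
qed

theorem T_I_supersolution_exists:
  assumes \<mu>: "\<mu> \<in> SR n U" and \<nu>: "\<nu> \<in> SR n V" and np: "\<not> prolonging n U V p (stat \<mu>) (stat \<nu>)"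
    and H: "\<And>\<nu>'. \<nu>' \<in> SR n V \<Longrightarrow> (\<exists>c. \<forall>k. \<forall>i\<in>S. c \<le> ec (stat \<mu>) (stat \<nu>') k (i, [])) \<Longrightarrow>
              \<not> prolonging n U V p (stat \<mu>) (stat \<nu>')"
  shows "\<exists>W. \<forall>i\<in>S. T_I \<mu> W i \<le> W i"
proof -
  define P where "P = {f \<in> PiE S V. proper_pair \<mu> (pure f)}"
  have "finite P" unfolding P_def using finite_PiE[OF finite_S finite_V] by auto
  obtain f0 where f0: "f0 \<in> PiE S V" using finite_V V_nonempty by (metis PiE_eq_empty_iff ex_in_conv)
  have pp: "proper_pair \<mu> \<nu>" using \<mu> \<nu> np by (simp add: proper_pair_def)
  obtain g0 where g0: "g0 \<in> PiE S V" "\<forall>i\<in>S. T_pair \<mu> (pure g0) (pair_cost \<mu> \<nu>) i = T_I \<mu> (pair_cost \<mu> \<nu>) i"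
    using T_I_greedy[OF f0, of \<mu> "pair_cost \<mu> \<nu>" "\<lambda>_. True"] by auto
  have "pair_cost \<mu> \<nu> i \<le> T_pair \<mu> (pure g0) (pair_cost \<mu> \<nu>) i" if i: "i \<in> S" for i
    using T_pair_pair_cost[OF pp i] T_pair_le_T_I[of i \<nu> \<mu> "pair_cost \<mu> \<nu>", OF i SR_in_pmfs_on[OF \<nu> i]] g0(2) i by simp
  hence "\<exists>c. \<forall>k. \<forall>i\<in>S. c \<le> ec (stat \<mu>) (stat (pure g0)) k (i, [])"
    by (rule ecost_bounded_below_of_subsolution)
  hence "proper_pair \<mu> (pure g0)"
    using H[OF pure_in_SR[OF g0(1)]] \<mu> pure_in_SR[OF g0(1)] by (simp add: proper_pair_def)
  hence "P \<noteq> {}" using g0(1) by (auto simp: P_def)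
  define \<Phi> where "\<Phi> f = (\<Sum>i\<in>S. pair_cost \<mu> (pure f) i)" for f
  have "Max (\<Phi> ` P) \<in> \<Phi> ` P" using \<open>finite P\<close> \<open>P \<noteq> {}\<close> by (intro Max_in) auto
  then obtain f where fP: "f \<in> P" and fM: "\<Phi> f = Max (\<Phi> ` P)" by auto
  have fmax: "\<Phi> g \<le> \<Phi> f" if "g \<in> P" for g
    unfolding fM using \<open>finite P\<close> that by (intro Max_ge) auto
  have "T_I \<mu> (pair_cost \<mu> (pure f)) i \<le> pair_cost \<mu> (pure f) i" if i: "i \<in> S" for i
  proof (rule ccontr)
    assume "\<not> ?thesis"
    then obtain g where g: "g \<in> PiE S V" "proper_pair \<mu> (pure g)"
      "\<And>i. i \<in> S \<Longrightarrow> pair_cost \<mu> (pure f) i \<le> pair_cost \<mu> (pure g) i"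
      "pair_cost \<mu> (pure f) i < pair_cost \<mu> (pure g) i"
      using pair_cost_improvement[OF \<mu> H, of f i] fP i by (auto simp: P_def not_le)
    have "\<Phi> f < \<Phi> g" unfolding \<Phi>_def
      by (rule sum_strict_mono_ex1[OF finite_S]) (use g(3,4) i in auto)
    with fmax[of g] g(1,2) show False by (auto simp: P_def)
  qed
  thus ?thesis by blast
qed

end

text \<open>The game with the players exchanged and the costs negated need not satisfy the SSP
  assumption again (costs are \<open>liminf\<close>s), but it does inherit this consequence of it, which is all
  the cost bounds below need.\<close>

locale ssp_bounded = ssp_model +
  assumes bounded_not_prolonging: "\<And>\<mu> \<nu>. \<mu> \<in> SR n U \<Longrightarrow> \<nu> \<in> SR n V \<Longrightarrow>
     (\<exists>c. \<forall>k. \<forall>i\<in>states n. \<bar>ecost n U V p gh (stat \<mu>) (stat \<nu>) k (i, [])\<bar> \<le> c) \<Longrightarrow>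
     \<not> prolonging n U V p (stat \<mu>) (stat \<nu>)"
begin

lemma T_I_subsolution_le_supersolution:
  assumes \<mu>: "\<mu> \<in> SR n U" and X: "\<And>i. i \<in> S \<Longrightarrow> X i \<le> T_I \<mu> X i"
    and Y: "\<And>i. i \<in> S \<Longrightarrow> T_I \<mu> Y i \<le> Y i" and i: "i \<in> S"
  shows "X i \<le> Y i"
proof -
  obtain f0 where "f0 \<in> PiE S V" using finite_V V_nonempty by (metis PiE_eq_empty_iff ex_in_conv)
  then obtain g where g: "g \<in> PiE S V" "\<forall>i\<in>S. T_pair \<mu> (pure g) X i = T_I \<mu> X i"
    using T_I_greedy[of f0 \<mu> X "\<lambda>_. True"] by auto
  have sub: "X i \<le> T_pair \<mu> (pure g) X i" if "i \<in> S" for i using X[OF that] g(2) that by simp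
  have "\<bar>ec (stat \<mu>) (stat (pure g)) k (j, [])\<bar> \<le> 2 * l1norm X + 2 * l1norm Y" if j: "j \<in> S" for k j
  proof -
    let ?s = "sv (stat \<mu>) (stat (pure g)) k (j, [])"
    have "l1norm X * ?s \<le> l1norm X" "l1norm Y * ?s \<le> l1norm Y"
      using survp_nonneg survp_le_1 l1norm_nonneg by (simp_all add: mult_left_le)
    thus ?thesis
      using ecost_ge_subsolution[OF sub j, of k] abs_le_l1norm[OF j, of X] abs_le_l1norm[OF j, of Y]
        ecost_le_supersolution[OF stat_in_Pi2[OF pure_in_SR[OF g(1)]] Y j, of k]
      by (simp add: abs_le_iff)
  qed
  hence "\<not> prolonging n U V p (stat \<mu>) (stat (pure g))"
    using bounded_not_prolonging[OF \<mu> pure_in_SR[OF g(1)]] by blast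
  thus ?thesis using subsolution_le_supersolution[OF pure_in_SR[OF g(1)] _ sub Y i] by blast
qed

theorem ecost_eventually_le:
  assumes \<mu>: "\<mu> \<in> SR n U" and J: "\<And>i. i \<in> S \<Longrightarrow> T_I \<mu> J i = J i"
    and \<pi>2: "\<pi>2 \<in> Pi2 n V" and i: "i \<in> S" and e: "0 < e"
  shows "\<exists>N. \<forall>k\<ge>N. ec (stat \<mu>) \<pi>2 k (i, []) \<le> J i + e"
proof -
  define X0 where "X0 j = J j + l1norm J" for j
  have T_I: "T_I \<mu> X j \<le> T_I \<mu> Y j + d"
    if "0 \<le> d" "\<And>j. j \<in> S \<Longrightarrow> X j \<le> Y j + d" "j \<in> S" for X Y d j
    by (rule T_I_le_add[of j \<mu> d X Y, OF that(3) SR_in_pmfs_on[OF \<mu> that(3)] that(1,2)])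
  have super: "T_I \<mu> X0 j \<le> X0 j" if "j \<in> S" for j
  proof -
    have "T_I \<mu> X0 j \<le> T_I \<mu> J j + l1norm J" by (rule T_I[OF l1norm_nonneg _ that]) (simp add: X0_def)
    thus ?thesis using J[OF that] by (simp add: X0_def)
  qed
  have sub: "J j \<le> T_I \<mu> J j" if "j \<in> S" for j using J[OF that] by simp
  have below: "J j \<le> X0 j" for j by (simp add: X0_def l1norm_nonneg)
  obtain L where L: "\<And>j. j \<in> S \<Longrightarrow> T_I \<mu> L j = L j"
    and lim: "\<And>j. j \<in> S \<Longrightarrow> (\<lambda>k. (T_I \<mu> ^^ k) X0 j) \<longlonglongrightarrow> L j"
    using iterate_tendsto_fixpoint[OF finite_S T_I super sub below] by blast
  have "L i \<le> J i" using T_I_subsolution_le_supersolution[OF \<mu> _ _ i, of L J] L J by simp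
  moreover obtain N where N: "\<And>k. N \<le> k \<Longrightarrow> (T_I \<mu> ^^ k) X0 i < L i + e"
    using order_tendstoD(2)[OF lim[OF i], of "L i + e"] e by (auto simp: eventually_sequentially)
  moreover have "ec (stat \<mu>) \<pi>2 k (i, []) \<le> (T_I \<mu> ^^ k) X0 i" for k
  proof -
    have "ec (stat \<mu>) \<pi>2 k (i, []) \<le> ect X0 (stat \<mu>) \<pi>2 k (i, [])"
      unfolding ecost_eq_ecost_term_0
      by (rule ecost_term_mono) (use abs_le_l1norm[of _ J] in \<open>force simp: X0_def abs_le_iff\<close>)
    also have "\<dots> \<le> (T_I \<mu> ^^ k) X0 i" using ecost_term_le_T_I_iterate[OF \<pi>2, of "(i, [])"] i by simp
    finally show ?thesis .
  qed
  ultimately show ?thesis by (meson less_imp_le add_right_mono order_trans)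
qed

end

section \<open>Exchanging the roles of the players\<close>

definition hist_swap :: "('a, 'b) hist \<Rightarrow> ('b, 'a) hist" where
  "hist_swap h = (fst h, map (\<lambda>(u, v, j). (v, u, j)) (snd h))"

lemma cur_hist_swap [simp]: "cur (hist_swap h) = cur h"
  by (cases "snd h") (auto simp: hist_swap_def cur_def last_map split: prod.splits)

lemma hext_hist_swap [simp]: "hext (hist_swap h) v u j = hist_swap (hext h u v j)"
  by (simp add: hist_swap_def hext_def)

lemma hist_swap_hist_swap [simp]: "hist_swap (hist_swap h) = h"
  by (cases h) (simp add: hist_swap_def map_idI case_prod_beta)

lemma hist_swap_Nil [simp]: "hist_swap (i, []) = (i, [])"
  by (simp add: hist_swap_def)

lemma stat_comp_hist_swap [simp]: "stat \<nu> \<circ> hist_swap = stat \<nu>"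
  by (rule ext) (simp add: stat_def)

lemma ecost_hist_swap:
  "ecost n V U (\<lambda>i j v u. p i j u v) (\<lambda>i v u j. - gh i u v j) (\<pi>2 \<circ> hist_swap) (\<pi>1 \<circ> hist_swap) k (hist_swap h)
   = - ecost n U V p gh \<pi>1 \<pi>2 k h"
proof (induction k arbitrary: h)
  case 0 then show ?case by simp
next
  case (Suc k)
  show ?case
  proof (cases "cur h \<in> states n")
    case True
    have "ecost n V U (\<lambda>i j v u. p i j u v) (\<lambda>i v u j. - gh i u v j) (\<pi>2 \<circ> hist_swap) (\<pi>1 \<circ> hist_swap) (Suc k) (hist_swap h) =
      (\<Sum>v\<in>V (cur h). \<Sum>u\<in>U (cur h). pmf (\<pi>2 h) v * pmf (\<pi>1 h) u *
           (\<Sum>j\<in>{0..n}. p (cur h) j u v * (- gh (cur h) u v j + - ecost n U V p gh \<pi>1 \<pi>2 k (hext h u v j))))"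
      using True Suc by (simp add: comp_def)
    also have "\<dots> = - (\<Sum>v\<in>V (cur h). \<Sum>u\<in>U (cur h). pmf (\<pi>1 h) u * pmf (\<pi>2 h) v *
           (\<Sum>j\<in>{0..n}. p (cur h) j u v * (gh (cur h) u v j + ecost n U V p gh \<pi>1 \<pi>2 k (hext h u v j))))"
    proof -
      have "pmf (\<pi>2 h) v * pmf (\<pi>1 h) u *
           (\<Sum>j\<in>{0..n}. p (cur h) j u v * (- gh (cur h) u v j + - ecost n U V p gh \<pi>1 \<pi>2 k (hext h u v j))) =
          - (pmf (\<pi>1 h) u * pmf (\<pi>2 h) v *
           (\<Sum>j\<in>{0..n}. p (cur h) j u v * (gh (cur h) u v j + ecost n U V p gh \<pi>1 \<pi>2 k (hext h u v j))))" for u v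
      proof -
        have "(\<Sum>j\<in>{0..n}. p (cur h) j u v * (- gh (cur h) u v j + - ecost n U V p gh \<pi>1 \<pi>2 k (hext h u v j))) =
              - (\<Sum>j\<in>{0..n}. p (cur h) j u v * (gh (cur h) u v j + ecost n U V p gh \<pi>1 \<pi>2 k (hext h u v j)))"
          by (simp add: sum_negf[symmetric] algebra_simps)
        thus ?thesis by simp
      qed
      thus ?thesis by (simp add: sum_negf)
    qed
    also have "(\<Sum>v\<in>V (cur h). \<Sum>u\<in>U (cur h). pmf (\<pi>1 h) u * pmf (\<pi>2 h) v *
           (\<Sum>j\<in>{0..n}. p (cur h) j u v * (gh (cur h) u v j + ecost n U V p gh \<pi>1 \<pi>2 k (hext h u v j)))) =
         (\<Sum>u\<in>U (cur h). \<Sum>v\<in>V (cur h). pmf (\<pi>1 h) u * pmf (\<pi>2 h) v *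
           (\<Sum>j\<in>{0..n}. p (cur h) j u v * (gh (cur h) u v j + ecost n U V p gh \<pi>1 \<pi>2 k (hext h u v j))))"
      by (rule sum.swap)
    also have "\<dots> = ecost n U V p gh \<pi>1 \<pi>2 (Suc k) h" using True by simp
    finally show ?thesis by simp
  qed simp
qed

lemma survp_hist_swap:
  "survp n V U (\<lambda>i j v u. p i j u v) (\<pi>2 \<circ> hist_swap) (\<pi>1 \<circ> hist_swap) k (hist_swap h) = survp n U V p \<pi>1 \<pi>2 k h"
proof (induction k arbitrary: h)
  case 0 then show ?case by simp
next
  case (Suc k)
  show ?case
  proof (cases "cur h \<in> states n")
    case True
    have "survp n V U (\<lambda>i j v u. p i j u v) (\<pi>2 \<circ> hist_swap) (\<pi>1 \<circ> hist_swap) (Suc k) (hist_swap h) =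
      (\<Sum>v\<in>V (cur h). \<Sum>u\<in>U (cur h). pmf (\<pi>1 h) u * pmf (\<pi>2 h) v *
           (\<Sum>j\<in>{0..n}. p (cur h) j u v * survp n U V p \<pi>1 \<pi>2 k (hext h u v j)))"
      using True Suc by (simp add: comp_def algebra_simps)
    also have "\<dots> = (\<Sum>u\<in>U (cur h). \<Sum>v\<in>V (cur h). pmf (\<pi>1 h) u * pmf (\<pi>2 h) v *
           (\<Sum>j\<in>{0..n}. p (cur h) j u v * survp n U V p \<pi>1 \<pi>2 k (hext h u v j)))"
      by (rule sum.swap)
    also have "\<dots> = survp n U V p \<pi>1 \<pi>2 (Suc k) h" using True by simp
    finally show ?thesis .
  qed simp
qed

lemma prolonging_hist_swap:
  "prolonging n V U (\<lambda>i j v u. p i j u v) (stat \<nu>) (stat \<mu>) \<longleftrightarrow> prolonging n U V p (stat \<mu>) (stat \<nu>)"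
  using survp_hist_swap[of n V U p "stat \<nu>" "stat \<mu>" _ "(_, [])"] by (simp add: prolonging_def)

context ssp_bounded
begin

abbreviation "p' \<equiv> (\<lambda>i j v u. p i j u v)"
abbreviation "gh' \<equiv> (\<lambda>i v u j. - gh i u v j)"

lemma ecost_dual_stat: "ecost n V U p' gh' (stat \<nu>) (stat \<mu>) k (i, []) = - ec (stat \<mu>) (stat \<nu>) k (i, [])"
  using ecost_hist_swap[of n V U p gh "stat \<nu>" "stat \<mu>" k "(i, [])"] by simp

lemma dual_ssp_bounded: "ssp_bounded n V U p' gh'"
proof -
  have model': "ssp_model n V U p'" using model by (simp add: ssp_model_def game_model_def)
  show ?thesis
  proof (unfold ssp_bounded_def ssp_bounded_axioms_def, intro conjI model' allI impI)
    fix \<nu> \<mu>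
    assume a: "\<nu> \<in> SR n V" "\<mu> \<in> SR n U"
      "\<exists>c. \<forall>k. \<forall>i\<in>states n. \<bar>ecost n V U p' gh' (stat \<nu>) (stat \<mu>) k (i, [])\<bar> \<le> c"
    then obtain c where c: "\<forall>k. \<forall>i\<in>S. \<bar>ecost n V U p' gh' (stat \<nu>) (stat \<mu>) k (i, [])\<bar> \<le> c" by blast
    have "\<forall>k. \<forall>i\<in>S. \<bar>ec (stat \<mu>) (stat \<nu>) k (i, [])\<bar> \<le> c"
      using c ecost_dual_stat[of \<nu> \<mu>] by (metis abs_minus_cancel)
    hence "\<not> prolonging n U V p (stat \<mu>) (stat \<nu>)" using bounded_not_prolonging a(1,2) by blast
    thus "\<not> prolonging n V U p' (stat \<nu>) (stat \<mu>)" using prolonging_hist_swap by blast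
  qed
qed

lemma dual_T_I:
  assumes i: "i \<in> S"
  shows "ssp_model.T_I n V U p' gh' \<nu> X i = - T_II \<nu> (\<lambda>j. - X j) i"
proof -
  have dual: "ssp_model n V U p'" using dual_ssp_bounded by (rule ssp_bounded.axioms(1))
  define R where "R = (\<lambda>u. \<Sum>v\<in>V i. pmf (\<nu> i) v * qfactor (\<lambda>j. - X j) i u v) ` U i"
  have "ssp_model.qfactor n p' gh' X i v u = - qfactor (\<lambda>j. - X j) i u v" for u v
    unfolding ssp_model.qfactor_def[OF dual] qfactor_def gexp_def
    by (simp add: sum_negf[symmetric] algebra_simps)
  hence "ssp_model.T_I n V U p' gh' \<nu> X i = Max (uminus ` R)"
    unfolding ssp_model.T_I_def[OF dual] sup_payoff_def R_def image_image
    by (simp add: sum_negf)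
  also have "\<dots> = - Min R"
    using minus_Min_eq_Max[of R] finite_U[OF i] U_nonempty[OF i] by (simp add: R_def)
  finally show ?thesis unfolding T_II_def inf_payoff_def R_def .
qed

theorem ecost_eventually_ge:
  assumes \<nu>: "\<nu> \<in> SR n V" and J: "\<And>i. i \<in> S \<Longrightarrow> T_II \<nu> J i = J i"
    and \<pi>1: "\<pi>1 \<in> Pi1 n U" and i: "i \<in> S" and e: "0 < e"
  shows "\<exists>N. \<forall>k\<ge>N. J i - e \<le> ec \<pi>1 (stat \<nu>) k (i, [])"
proof -
  have "\<pi>1 \<circ> hist_swap \<in> Pi2 n U"
    using \<pi>1 unfolding Pi1_def Pi2_def mem_Collect_eq comp_apply by (metis cur_hist_swap)
  moreover have "ssp_model.T_I n V U p' gh' \<nu> (\<lambda>j. - J j) j = - J j" if "j \<in> S" for j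
    using J[OF that] dual_T_I[OF that] by simp
  ultimately obtain N where N: "\<forall>k\<ge>N. ecost n V U p' gh' (stat \<nu>) (\<pi>1 \<circ> hist_swap) k (i, []) \<le> - J i + e"
    using ssp_bounded.ecost_eventually_le[OF dual_ssp_bounded \<nu>, of "\<lambda>j. - J j"] i e by blast
  moreover have "ecost n V U p' gh' (stat \<nu>) (\<pi>1 \<circ> hist_swap) k (i, []) = - ec \<pi>1 (stat \<nu>) k (i, [])" for k
    using ecost_hist_swap[of n V U p gh "stat \<nu>" \<pi>1 k "(i, [])"] by simp
  ultimately have "\<forall>k\<ge>N. J i - e \<le> ec \<pi>1 (stat \<nu>) k (i, [])" by force
  thus ?thesis by blast
qed

theorem T_II_subsolution_exists:
  assumes \<mu>: "\<mu> \<in> SR n U" and \<nu>: "\<nu> \<in> SR n V" and np: "\<not> prolonging n U V p (stat \<mu>) (stat \<nu>)"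
    and H: "\<And>\<mu>'. \<mu>' \<in> SR n U \<Longrightarrow> (\<exists>c. \<forall>k. \<forall>i\<in>S. ec (stat \<mu>') (stat \<nu>) k (i, []) \<le> c) \<Longrightarrow>
              \<not> prolonging n U V p (stat \<mu>') (stat \<nu>)"
  shows "\<exists>W. \<forall>i\<in>S. W i \<le> T_II \<nu> W i"
proof -
  have H': "\<not> prolonging n V U p' (stat \<nu>) (stat \<mu>')"
    if "\<mu>' \<in> SR n U" "\<exists>c. \<forall>k. \<forall>i\<in>S. c \<le> ecost n V U p' gh' (stat \<nu>) (stat \<mu>') k (i, [])" for \<mu>'
  proof -
    from that(2) obtain c where "\<forall>k. \<forall>i\<in>S. c \<le> - ec (stat \<mu>') (stat \<nu>) k (i, [])"
      by (auto simp: ecost_dual_stat)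
    hence "\<exists>c. \<forall>k. \<forall>i\<in>S. ec (stat \<mu>') (stat \<nu>) k (i, []) \<le> c"
      by (intro exI[of _ "- c"]) (auto simp: le_minus_iff)
    thus ?thesis using H[OF that(1)] prolonging_hist_swap by blast
  qed
  obtain W where "\<forall>i\<in>S. ssp_model.T_I n V U p' gh' \<nu> W i \<le> W i"
    using ssp_model.T_I_supersolution_exists[OF ssp_bounded.axioms(1)[OF dual_ssp_bounded] \<nu> \<mu>] np H'
      prolonging_hist_swap by blast
  hence "\<forall>i\<in>S. - W i \<le> T_II \<nu> (\<lambda>j. - W j) i" using dual_T_I by force
  thus ?thesis by (intro exI[of _ "\<lambda>j. - W j"])
qed

end

section \<open>The minimax Bellman operator and the value of the game\<close>

context ssp_model
begin

lemma Jcost_ge_of_ecost_ge: "(\<And>k. c \<le> ec \<pi>1 \<pi>2 k (i, [])) \<Longrightarrow> ereal c \<le> Jcost n U V p gh i \<pi>1 \<pi>2"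
  unfolding Jcost_def by (rule Liminf_bounded) auto

lemma Jcost_le_of_ecost_le: "(\<And>k. ec \<pi>1 \<pi>2 k (i, []) \<le> c) \<Longrightarrow> Jcost n U V p gh i \<pi>1 \<pi>2 \<le> ereal c"
  unfolding Jcost_def by (rule Liminf_le) auto

lemma bdd_below_sup_payoff: "i \<in> S \<Longrightarrow> bdd_below (sup_payoff (U i) (V i) q ` pmfs_on (U i))"
proof -
  assume i: "i \<in> S"
  obtain \<sigma> where "\<sigma> \<in> pmfs_on (V i)" using pmfs_on_nonempty[OF V_nonempty[OF i]] by blast
  thus ?thesis using inf_payoff_le_sup_payoff[OF finite_U[OF i] finite_V[OF i]]
    by (intro bdd_belowI[of _ "inf_payoff (U i) (V i) q \<sigma>"]) blast
qed

lemma T_game_le_T_I: "i \<in> S \<Longrightarrow> \<mu> i \<in> pmfs_on (U i) \<Longrightarrow> T_game X i \<le> T_I \<mu> X i"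
  unfolding T_game_def T_I_def by (rule cINF_lower[OF bdd_below_sup_payoff])

lemma T_II_le_T_game: "i \<in> S \<Longrightarrow> \<nu> i \<in> pmfs_on (V i) \<Longrightarrow> T_II \<nu> X i \<le> T_game X i"
  unfolding T_game_def T_II_def
  by (rule cINF_greatest[OF pmfs_on_nonempty[OF U_nonempty]]) (auto intro: inf_payoff_le_sup_payoff[OF finite_U finite_V])

lemma T_game_le_add:
  assumes i: "i \<in> S" and d: "0 \<le> d" and XY: "\<And>j. j \<in> S \<Longrightarrow> X j \<le> Y j + d"
  shows "T_game X i \<le> T_game Y i + d"
proof -
  have "T_game X i - d \<le> T_game Y i" unfolding T_game_def
  proof (rule cINF_greatest[OF pmfs_on_nonempty[OF U_nonempty[OF i]]])
    fix \<rho> assume \<rho>: "\<rho> \<in> pmfs_on (U i)"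
    have "T_game X i \<le> T_I (\<lambda>_. \<rho>) X i" by (rule T_game_le_T_I[OF i \<rho>])
    also have "\<dots> \<le> T_I (\<lambda>_. \<rho>) Y i + d" by (rule T_I_le_add[OF i \<rho> d XY])
    finally show "(INF \<rho>\<in>pmfs_on (U i). sup_payoff (U i) (V i) (qfactor X i) \<rho>) - d
        \<le> sup_payoff (U i) (V i) (qfactor Y i) \<rho>"
      by (simp add: T_game_def T_I_def)
  qed
  thus ?thesis by simp
qed

lemma T_game_eq_SUP: "i \<in> S \<Longrightarrow> T_game X i = (SUP \<sigma>\<in>pmfs_on (V i). inf_payoff (U i) (V i) (qfactor X i) \<sigma>)"
  unfolding T_game_def by (rule minimax_theorem[OF finite_U U_nonempty finite_V V_nonempty])

lemma T_I_eq_T_game_of_arg_min: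
  assumes i: "i \<in> S"
    and "is_arg_min (sup_payoff (U i) (V i) (qfactor X i)) (\<lambda>\<rho>. \<rho> \<in> pmfs_on (U i)) (\<mu> i)"
  shows "T_I \<mu> X i = T_game X i"
proof (rule antisym)
  have mem: "\<mu> i \<in> pmfs_on (U i)"
    and le: "\<And>\<rho>. \<rho> \<in> pmfs_on (U i) \<Longrightarrow> sup_payoff (U i) (V i) (qfactor X i) (\<mu> i) \<le> sup_payoff (U i) (V i) (qfactor X i) \<rho>"
    using assms(2) by (auto simp: is_arg_min_def not_less)
  show "T_I \<mu> X i \<le> T_game X i"
    unfolding T_I_def T_game_def by (rule cINF_greatest[OF pmfs_on_nonempty[OF U_nonempty[OF i]] le])
  show "T_game X i \<le> T_I \<mu> X i" by (rule T_game_le_T_I[of i \<mu>, OF i mem])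
qed

lemma T_II_eq_T_game_of_arg_max:
  assumes i: "i \<in> S"
    and "is_arg_max (inf_payoff (U i) (V i) (qfactor X i)) (\<lambda>\<sigma>. \<sigma> \<in> pmfs_on (V i)) (\<nu> i)"
  shows "T_II \<nu> X i = T_game X i"
proof (rule antisym)
  have mem: "\<nu> i \<in> pmfs_on (V i)"
    and le: "\<And>\<sigma>. \<sigma> \<in> pmfs_on (V i) \<Longrightarrow> inf_payoff (U i) (V i) (qfactor X i) \<sigma> \<le> inf_payoff (U i) (V i) (qfactor X i) (\<nu> i)"
    using assms(2) by (auto simp: is_arg_max_def not_less)
  have "(SUP \<sigma>\<in>pmfs_on (V i). inf_payoff (U i) (V i) (qfactor X i) \<sigma>) \<le> inf_payoff (U i) (V i) (qfactor X i) (\<nu> i)"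
    by (rule cSUP_least[OF pmfs_on_nonempty[OF V_nonempty[OF i]]]) (rule le)
  thus "T_game X i \<le> T_II \<nu> X i" by (simp only: T_II_def T_game_eq_SUP[OF i])
  show "T_II \<nu> X i \<le> T_game X i" by (rule T_II_le_T_game[of i \<nu>, OF i mem])
qed

lemma T_I_attains_T_game: "\<exists>\<mu>\<in>SR n U. \<forall>i\<in>S. T_I \<mu> X i = T_game X i"
proof -
  have "\<forall>i\<in>S. \<exists>\<rho>. is_arg_min (sup_payoff (U i) (V i) (qfactor X i)) (\<lambda>\<rho>. \<rho> \<in> pmfs_on (U i)) \<rho>"
  proof
    fix i assume i: "i \<in> S"
    obtain \<rho> where "\<rho> \<in> pmfs_on (U i)"
      "\<forall>\<rho>'\<in>pmfs_on (U i). sup_payoff (U i) (V i) (qfactor X i) \<rho> \<le> sup_payoff (U i) (V i) (qfactor X i) \<rho>'"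
      using sup_payoff_attains_min[OF finite_U[OF i] U_nonempty[OF i] finite_V[OF i] V_nonempty[OF i]] by blast
    thus "\<exists>\<rho>. is_arg_min (sup_payoff (U i) (V i) (qfactor X i)) (\<lambda>\<rho>. \<rho> \<in> pmfs_on (U i)) \<rho>"
      by (intro exI[of _ \<rho>]) (auto simp: is_arg_min_def not_less)
  qed
  then obtain \<mu> where \<mu>: "\<forall>i\<in>S. is_arg_min (sup_payoff (U i) (V i) (qfactor X i)) (\<lambda>\<rho>. \<rho> \<in> pmfs_on (U i)) (\<mu> i)"
    by (rule bchoice[THEN exE])
  hence "\<mu> \<in> SR n U" by (auto simp: SR_def pmfs_on_def is_arg_min_def)
  thus ?thesis using T_I_eq_T_game_of_arg_min \<mu> by blast
qed

lemma T_II_attains_T_game: "\<exists>\<nu>\<in>SR n V. \<forall>i\<in>S. T_II \<nu> X i = T_game X i"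
proof -
  have "\<forall>i\<in>S. \<exists>\<sigma>. is_arg_max (inf_payoff (U i) (V i) (qfactor X i)) (\<lambda>\<sigma>. \<sigma> \<in> pmfs_on (V i)) \<sigma>"
  proof
    fix i assume i: "i \<in> S"
    obtain \<sigma> where "\<sigma> \<in> pmfs_on (V i)"
      "\<forall>\<sigma>'\<in>pmfs_on (V i). inf_payoff (U i) (V i) (qfactor X i) \<sigma>' \<le> inf_payoff (U i) (V i) (qfactor X i) \<sigma>"
      using inf_payoff_attains_max[OF finite_U[OF i] U_nonempty[OF i] finite_V[OF i] V_nonempty[OF i]] by blast
    thus "\<exists>\<sigma>. is_arg_max (inf_payoff (U i) (V i) (qfactor X i)) (\<lambda>\<sigma>. \<sigma> \<in> pmfs_on (V i)) \<sigma>"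
      by (intro exI[of _ \<sigma>]) (auto simp: is_arg_max_def not_less)
  qed
  then obtain \<nu> where \<nu>: "\<forall>i\<in>S. is_arg_max (inf_payoff (U i) (V i) (qfactor X i)) (\<lambda>\<sigma>. \<sigma> \<in> pmfs_on (V i)) (\<nu> i)"
    by (rule bchoice[THEN exE])
  hence "\<nu> \<in> SR n V" by (auto simp: SR_def pmfs_on_def is_arg_max_def)
  thus ?thesis using T_II_eq_T_game_of_arg_max \<nu> by blast
qed

end

lemma liminf_Suc_le_of_eventually:
  assumes "\<And>e. 0 < e \<Longrightarrow> \<exists>N. \<forall>k\<ge>N. x k \<le> a + e"
  shows "liminf (\<lambda>t. ereal (x (Suc t))) \<le> ereal a"
proof (rule ereal_le_epsilon2)
  fix e :: real assume e: "0 < e"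
  obtain N where N: "\<forall>k\<ge>N. x k \<le> a + e" using assms[OF e] by blast
  have "liminf (\<lambda>t. ereal (x (Suc t))) \<le> ereal (a + e)"
    by (rule Liminf_le) (use N in \<open>auto simp: eventually_sequentially intro!: exI[of _ N]\<close>)
  thus "liminf (\<lambda>t. ereal (x (Suc t))) \<le> ereal a + ereal e" by simp
qed

lemma liminf_Suc_ge_of_eventually:
  assumes "\<And>e. 0 < e \<Longrightarrow> \<exists>N. \<forall>k\<ge>N. a - e \<le> x k"
  shows "ereal a \<le> liminf (\<lambda>t. ereal (x (Suc t)))"
  unfolding le_Liminf_iff
proof (intro allI impI)
  fix y assume y: "y < ereal a"
  show "eventually (\<lambda>t. y < ereal (x (Suc t))) sequentially"
  proof (cases y)
    case (real r)
    hence r: "r < a" using y by simp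
    obtain N where N: "\<forall>k\<ge>N. a - (a - r) / 2 \<le> x k" using assms[of "(a - r) / 2"] r by auto
    show ?thesis unfolding eventually_sequentially
    proof (intro exI allI impI)
      fix t assume "N \<le> t"
      hence "a - (a - r) / 2 \<le> x (Suc t)" using N by auto
      hence "r < x (Suc t)" using r by (auto simp: field_simps)
      thus "y < ereal (x (Suc t))" using real by simp
    qed
  qed (use y in auto)
qed

context ssp_bounded
begin

lemma Jcost_le_of_T_I_fixpoint:
  assumes "\<mu> \<in> SR n U" "\<And>i. i \<in> S \<Longrightarrow> T_I \<mu> X i = X i" "\<pi>2 \<in> Pi2 n V" "i \<in> S"
  shows "Jcost n U V p gh i (stat \<mu>) \<pi>2 \<le> ereal (X i)"
  unfolding Jcost_def by (rule liminf_Suc_le_of_eventually) (rule ecost_eventually_le[OF assms])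

lemma Jcost_ge_of_T_II_fixpoint:
  assumes "\<nu> \<in> SR n V" "\<And>i. i \<in> S \<Longrightarrow> T_II \<nu> X i = X i" "\<pi>1 \<in> Pi1 n U" "i \<in> S"
  shows "ereal (X i) \<le> Jcost n U V p gh i \<pi>1 (stat \<nu>)"
  unfolding Jcost_def by (rule liminf_Suc_ge_of_eventually) (rule ecost_eventually_ge[OF assms])

theorem Jstar_eq_fixpoint:
  assumes X: "\<And>i. i \<in> S \<Longrightarrow> T_game X i = X i" and i: "i \<in> S"
  shows "Jstar n U V p gh i = ereal (X i)"
proof (rule antisym)
  obtain \<mu> where \<mu>: "\<mu> \<in> SR n U" "\<And>i. i \<in> S \<Longrightarrow> T_I \<mu> X i = X i" using T_I_attains_T_game[of X] X by auto
  have "Jstar n U V p gh i \<le> (SUP \<pi>2\<in>Pi2 n V. Jcost n U V p gh i (stat \<mu>) \<pi>2)"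
    unfolding Jstar_def by (rule INF_lower[OF stat_in_Pi1[OF \<mu>(1)]])
  also have "\<dots> \<le> ereal (X i)" by (rule SUP_least) (rule Jcost_le_of_T_I_fixpoint[OF \<mu> _ i])
  finally show "Jstar n U V p gh i \<le> ereal (X i)" .
  obtain \<nu> where \<nu>: "\<nu> \<in> SR n V" "\<And>i. i \<in> S \<Longrightarrow> T_II \<nu> X i = X i" using T_II_attains_T_game[of X] X by auto
  show "ereal (X i) \<le> Jstar n U V p gh i"
    unfolding Jstar_def
    by (rule INF_greatest, rule SUP_upper2[OF stat_in_Pi2[OF \<nu>(1)]]) (rule Jcost_ge_of_T_II_fixpoint[OF \<nu> _ i])
qed

theorem Jlower_eq_fixpoint:
  assumes X: "\<And>i. i \<in> S \<Longrightarrow> T_game X i = X i" and i: "i \<in> S"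
  shows "Jlower n U V p gh i = ereal (X i)"
proof (rule antisym)
  obtain \<nu> where \<nu>: "\<nu> \<in> SR n V" "\<And>i. i \<in> S \<Longrightarrow> T_II \<nu> X i = X i" using T_II_attains_T_game[of X] X by auto
  have "ereal (X i) \<le> (INF \<pi>1\<in>Pi1 n U. Jcost n U V p gh i \<pi>1 (stat \<nu>))"
    by (rule INF_greatest) (rule Jcost_ge_of_T_II_fixpoint[OF \<nu> _ i])
  also have "\<dots> \<le> Jlower n U V p gh i"
    unfolding Jlower_def by (rule SUP_upper[OF stat_in_Pi2[OF \<nu>(1)]])
  finally show "ereal (X i) \<le> Jlower n U V p gh i" .
  obtain \<mu> where \<mu>: "\<mu> \<in> SR n U" "\<And>i. i \<in> S \<Longrightarrow> T_I \<mu> X i = X i" using T_I_attains_T_game[of X] X by auto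
  show "Jlower n U V p gh i \<le> ereal (X i)"
    unfolding Jlower_def
    by (rule SUP_least, rule INF_lower2[OF stat_in_Pi1[OF \<mu>(1)]]) (rule Jcost_le_of_T_I_fixpoint[OF \<mu> _ i])
qed

lemma optimal_I_of_fixpoint:
  assumes \<mu>: "\<mu> \<in> SR n U" "\<And>i. i \<in> S \<Longrightarrow> T_I \<mu> X i = X i"
    and X: "\<And>i. i \<in> S \<Longrightarrow> T_game X i = X i"
  shows "optimal_I n U V p gh (stat \<mu>)"
  unfolding optimal_I_def
proof (intro conjI ballI stat_in_Pi1[OF \<mu>(1)] antisym)
  fix i assume i: "i \<in> S"
  obtain \<nu> where \<nu>: "\<nu> \<in> SR n V" "\<And>i. i \<in> S \<Longrightarrow> T_II \<nu> X i = X i" using T_II_attains_T_game[of X] X by auto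
  have J: "Jstar n U V p gh i = ereal (X i)" by (rule Jstar_eq_fixpoint[OF X i])
  show "(SUP \<pi>2\<in>Pi2 n V. Jcost n U V p gh i (stat \<mu>) \<pi>2) \<le> Jstar n U V p gh i"
    unfolding J by (rule SUP_least) (rule Jcost_le_of_T_I_fixpoint[OF \<mu> _ i])
  have "ereal (X i) \<le> Jcost n U V p gh i (stat \<mu>) (stat \<nu>)"
    by (rule Jcost_ge_of_T_II_fixpoint[OF \<nu> stat_in_Pi1[OF \<mu>(1)] i])
  also have "\<dots> \<le> (SUP \<pi>2\<in>Pi2 n V. Jcost n U V p gh i (stat \<mu>) \<pi>2)"
    by (rule SUP_upper[OF stat_in_Pi2[OF \<nu>(1)]])
  finally show "Jstar n U V p gh i \<le> (SUP \<pi>2\<in>Pi2 n V. Jcost n U V p gh i (stat \<mu>) \<pi>2)"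
    unfolding J .
qed

lemma optimal_II_of_fixpoint:
  assumes \<nu>: "\<nu> \<in> SR n V" "\<And>i. i \<in> S \<Longrightarrow> T_II \<nu> X i = X i"
    and X: "\<And>i. i \<in> S \<Longrightarrow> T_game X i = X i"
  shows "optimal_II n U V p gh (stat \<nu>)"
  unfolding optimal_II_def
proof (intro conjI ballI stat_in_Pi2[OF \<nu>(1)] antisym)
  fix i assume i: "i \<in> S"
  obtain \<mu> where \<mu>: "\<mu> \<in> SR n U" "\<And>i. i \<in> S \<Longrightarrow> T_I \<mu> X i = X i" using T_I_attains_T_game[of X] X by auto
  have J: "Jlower n U V p gh i = ereal (X i)" by (rule Jlower_eq_fixpoint[OF X i])
  show "Jlower n U V p gh i \<le> (INF \<pi>1\<in>Pi1 n U. Jcost n U V p gh i \<pi>1 (stat \<nu>))"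
    unfolding J by (rule INF_greatest) (rule Jcost_ge_of_T_II_fixpoint[OF \<nu> _ i])
  have "(INF \<pi>1\<in>Pi1 n U. Jcost n U V p gh i \<pi>1 (stat \<nu>)) \<le> Jcost n U V p gh i (stat \<mu>) (stat \<nu>)"
    by (rule INF_lower[OF stat_in_Pi1[OF \<mu>(1)]])
  also have "\<dots> \<le> ereal (X i)"
    by (rule Jcost_le_of_T_I_fixpoint[OF \<mu> stat_in_Pi2[OF \<nu>(1)] i])
  finally show "(INF \<pi>1\<in>Pi1 n U. Jcost n U V p gh i \<pi>1 (stat \<nu>)) \<le> Jlower n U V p gh i"
    unfolding J .
qed

end

section \<open>The Q-factor equation\<close>

context ssp_model
begin

lemma Ubar_eq_pmfs_on: "Ubar W i = pmfs_on (W i)"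
  by (simp add: Ubar_def pmfs_on_def)

lemma minimaxQ_eq_T_game:
  assumes i: "i \<in> S" and Q: "\<And>u v. u \<in> U i \<Longrightarrow> v \<in> V i \<Longrightarrow> Q (i, u, v) = qfactor X i u v"
  shows "minimaxQ U V Q i = T_game X i"
proof -
  have "Qbar U V Q i = mixed_payoff (U i) (V i) (qfactor X i)"
    unfolding Qbar_def mixed_payoff_def using Q by (intro ext sum.cong refl) auto
  thus ?thesis
    unfolding minimaxQ_def T_game_def Ubar_eq_pmfs_on
    by (simp add: SUP_mixed_payoff[OF finite_V[OF i] V_nonempty[OF i]])
qed

lemma Fop_eq_qfactor: "Fop n U V p gh Q (i, u, v) = qfactor (minimaxQ U V Q) i u v"
  by (simp add: Fop_def qfactor_def)

lemma fixed_point_eq_qfactor: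
  assumes "fixed_point n U V p gh Q" "i \<in> S" "u \<in> U i" "v \<in> V i"
  shows "Q (i, u, v) = qfactor (minimaxQ U V Q) i u v"
  using assms unfolding fixed_point_def Fop_eq_qfactor[symmetric] Rset_def by auto

lemma fixed_point_T_game:
  assumes "fixed_point n U V p gh Q" "i \<in> S"
  shows "T_game (minimaxQ U V Q) i = minimaxQ U V Q i"
  using minimaxQ_eq_T_game[OF assms(2) fixed_point_eq_qfactor[OF assms]] by simp

lemma fixed_point_restrict_qfactor:
  assumes J: "\<And>i. i \<in> S \<Longrightarrow> T_game J i = J i"
  shows "fixed_point n U V p gh (restrict (\<lambda>(i, u, v). qfactor J i u v) (Rset n U V))"
    (is "fixed_point n U V p gh ?Q")
  unfolding fixed_point_def
proof (intro conjI ballI)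
  show "?Q \<in> extensional (Rset n U V)" by simp
  fix x assume "x \<in> Rset n U V"
  then obtain i u v where x: "x = (i, u, v)" "i \<in> S" "u \<in> U i" "v \<in> V i" by (auto simp: Rset_def)
  have "minimaxQ U V ?Q j = J j" if "j \<in> S" for j
    using minimaxQ_eq_T_game[OF that, of ?Q J] J[OF that] that by (simp add: Rset_def)
  hence "qfactor (minimaxQ U V ?Q) i = qfactor J i" by (rule qfactor_cong)
  hence "Fop n U V p gh ?Q x = qfactor J i u v" using x(1) by (simp only: Fop_eq_qfactor)
  thus "?Q x = Fop n U V p gh ?Q x" using x by (simp add: Rset_def)
qed

end

context ssp_bounded
begin

lemma fixed_point_Jstar_eq_minimaxQ:
  assumes "fixed_point n U V p gh Q" "i \<in> S"
  shows "Jstar n U V p gh i = ereal (minimaxQ U V Q i)"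
  by (rule Jstar_eq_fixpoint[OF fixed_point_T_game[OF assms(1)] assms(2)])

lemma fixed_point_eq_Jstar:
  assumes Q: "fixed_point n U V p gh Q" and "i \<in> S" "u \<in> U i" "v \<in> V i"
  shows "ereal (Q (i, u, v)) = ereal (gexp n p gh i u v) + (\<Sum>j\<in>S. ereal (p i j u v) * Jstar n U V p gh j)"
proof -
  have "(\<Sum>j\<in>S. ereal (p i j u v) * Jstar n U V p gh j) = (\<Sum>j\<in>S. ereal (p i j u v * minimaxQ U V Q j))"
    by (rule sum.cong) (simp_all add: fixed_point_Jstar_eq_minimaxQ[OF Q])
  also have "\<dots> = ereal (\<Sum>j\<in>S. p i j u v * minimaxQ U V Q j)" by (rule sum_ereal)
  finally have "(\<Sum>j\<in>S. ereal (p i j u v) * Jstar n U V p gh j) = ereal (\<Sum>j\<in>S. p i j u v * minimaxQ U V Q j)" .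
  thus ?thesis using fixed_point_eq_qfactor[OF assms] by (simp add: qfactor_def)
qed

lemma fixed_point_unique:
  assumes Q: "fixed_point n U V p gh Q" and Q': "fixed_point n U V p gh Q'"
  shows "Q = Q'"
proof (rule extensionalityI)
  show "Q \<in> extensional (Rset n U V)" "Q' \<in> extensional (Rset n U V)"
    using Q Q' by (simp_all add: fixed_point_def)
  fix x assume "x \<in> Rset n U V"
  then obtain i u v where x: "x = (i, u, v)" "i \<in> S" "u \<in> U i" "v \<in> V i" by (auto simp: Rset_def)
  have "minimaxQ U V Q j = minimaxQ U V Q' j" if "j \<in> S" for j
    using fixed_point_Jstar_eq_minimaxQ[OF Q that] fixed_point_Jstar_eq_minimaxQ[OF Q' that] by simp
  hence "qfactor (minimaxQ U V Q) i = qfactor (minimaxQ U V Q') i" by (rule qfactor_cong)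
  thus "Q x = Q' x" using fixed_point_eq_qfactor[OF Q x(2-4)] fixed_point_eq_qfactor[OF Q' x(2-4)] x(1)
    by simp
qed

lemma fixed_point_optimal:
  assumes Q: "fixed_point n U V p gh Q"
    and opt: "\<forall>i\<in>S.
      is_arg_min (\<lambda>\<rho>. SUP \<sigma>\<in>Ubar V i. Qbar U V Q i \<rho> \<sigma>) (\<lambda>\<rho>. \<rho> \<in> Ubar U i) (\<mu> i) \<and>
      is_arg_max (\<lambda>\<sigma>. INF \<rho>\<in>Ubar U i. Qbar U V Q i \<rho> \<sigma>) (\<lambda>\<sigma>. \<sigma> \<in> Ubar V i) (\<nu> i)"
  shows "optimal_I n U V p gh (stat \<mu>) \<and> optimal_II n U V p gh (stat \<nu>)"
proof -
  define X where "X = minimaxQ U V Q"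
  have X: "\<And>i. i \<in> S \<Longrightarrow> T_game X i = X i" unfolding X_def by (rule fixed_point_T_game[OF Q])
  have "is_arg_min (sup_payoff (U i) (V i) (qfactor X i)) (\<lambda>\<rho>. \<rho> \<in> pmfs_on (U i)) (\<mu> i)"
    and "is_arg_max (inf_payoff (U i) (V i) (qfactor X i)) (\<lambda>\<sigma>. \<sigma> \<in> pmfs_on (V i)) (\<nu> i)"
    if i: "i \<in> S" for i
  proof -
    have Qbar: "Qbar U V Q i = mixed_payoff (U i) (V i) (qfactor X i)"
      unfolding Qbar_def mixed_payoff_def X_def using fixed_point_eq_qfactor[OF Q i]
      by (intro ext sum.cong refl) auto
    have sup: "sup_payoff (U i) (V i) (qfactor X i) = (\<lambda>\<rho>. SUP \<sigma>\<in>Ubar V i. Qbar U V Q i \<rho> \<sigma>)"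
      by (rule ext) (simp only: Qbar Ubar_eq_pmfs_on SUP_mixed_payoff[OF finite_V[OF i] V_nonempty[OF i]])
    have inf: "inf_payoff (U i) (V i) (qfactor X i) = (\<lambda>\<sigma>. INF \<rho>\<in>Ubar U i. Qbar U V Q i \<rho> \<sigma>)"
      by (rule ext) (simp only: Qbar Ubar_eq_pmfs_on INF_mixed_payoff[OF finite_U[OF i] U_nonempty[OF i]])
    show "is_arg_min (sup_payoff (U i) (V i) (qfactor X i)) (\<lambda>\<rho>. \<rho> \<in> pmfs_on (U i)) (\<mu> i)"
      "is_arg_max (inf_payoff (U i) (V i) (qfactor X i)) (\<lambda>\<sigma>. \<sigma> \<in> pmfs_on (V i)) (\<nu> i)"
      unfolding sup inf Ubar_eq_pmfs_on[symmetric] using opt i by blast+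
  qed
  moreover from this have "\<mu> \<in> SR n U" "\<nu> \<in> SR n V"
    by (auto simp: SR_def pmfs_on_def is_arg_min_def is_arg_max_def)
  ultimately show ?thesis
    using optimal_I_of_fixpoint[OF _ _ X] optimal_II_of_fixpoint[OF _ _ X]
      T_I_eq_T_game_of_arg_min T_II_eq_T_game_of_arg_max X by metis
qed

end

locale ssp_assumed = ssp_model +
  assumes ssp_assumption: "SSP_assumption n U V p gh"
begin

lemma prolonging_infinite_cost:
  "\<mu> \<in> SR n U \<Longrightarrow> \<nu> \<in> SR n V \<Longrightarrow> prolonging n U V p (stat \<mu>) (stat \<nu>) \<Longrightarrow>
    \<exists>i\<in>S. Jcost n U V p gh i (stat \<mu>) (stat \<nu>) \<in> {\<infinity>, -\<infinity>}"
  using ssp_assumption unfolding SSP_assumption_def by blast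

sublocale ssp_bounded
proof
  fix \<mu> \<nu> assume \<mu>: "\<mu> \<in> SR n U" and \<nu>: "\<nu> \<in> SR n V"
    and "\<exists>c. \<forall>k. \<forall>i\<in>S. \<bar>ec (stat \<mu>) (stat \<nu>) k (i, [])\<bar> \<le> c"
  then obtain c where c: "\<And>k i. i \<in> S \<Longrightarrow> \<bar>ec (stat \<mu>) (stat \<nu>) k (i, [])\<bar> \<le> c"
    by blast
  show "\<not> prolonging n U V p (stat \<mu>) (stat \<nu>)"
  proof
    assume "prolonging n U V p (stat \<mu>) (stat \<nu>)"
    then obtain i where i: "i \<in> S" "Jcost n U V p gh i (stat \<mu>) (stat \<nu>) \<in> {\<infinity>, -\<infinity>}"
      using prolonging_infinite_cost[OF \<mu> \<nu>] by blast
    have "ereal (- c) \<le> Jcost n U V p gh i (stat \<mu>) (stat \<nu>)" "Jcost n U V p gh i (stat \<mu>) (stat \<nu>) \<le> ereal c"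
      using c[OF i(1)] abs_le_D1 abs_le_D2 minus_le_iff
      by (metis Jcost_ge_of_ecost_ge, metis Jcost_le_of_ecost_le)
    thus False using i(2) by auto
  qed
qed

theorem T_game_fixpoint_exists: "\<exists>J. \<forall>i\<in>S. T_game J i = J i"
proof -
  obtain \<mu> where \<mu>: "\<mu> \<in> SR n U" and fin_\<mu>: "\<And>\<nu> i. \<nu> \<in> SR n V \<Longrightarrow> i \<in> S \<Longrightarrow> Jcost n U V p gh i (stat \<mu>) (stat \<nu>) < \<infinity>"
    using ssp_assumption unfolding SSP_assumption_def by blast
  obtain \<nu> where \<nu>: "\<nu> \<in> SR n V" and fin_\<nu>: "\<And>\<mu> i. \<mu> \<in> SR n U \<Longrightarrow> i \<in> S \<Longrightarrow> Jcost n U V p gh i (stat \<mu>) (stat \<nu>) > -\<infinity>"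
    using ssp_assumption unfolding SSP_assumption_def by blast
  have np: "\<not> prolonging n U V p (stat \<mu>) (stat \<nu>)"
    using prolonging_infinite_cost[OF \<mu> \<nu>] fin_\<mu>[OF \<nu>] fin_\<nu>[OF \<mu>] by fastforce
  have "\<exists>Jh. \<forall>i\<in>S. T_I \<mu> Jh i \<le> Jh i"
  proof (rule T_I_supersolution_exists[OF \<mu> \<nu> np])
    fix \<nu>' assume \<nu>': "\<nu>' \<in> SR n V" and "\<exists>c. \<forall>k. \<forall>i\<in>S. c \<le> ec (stat \<mu>) (stat \<nu>') k (i, [])"
    then obtain c where "\<And>k i. i \<in> S \<Longrightarrow> c \<le> ec (stat \<mu>) (stat \<nu>') k (i, [])" by blast
    hence "\<And>i. i \<in> S \<Longrightarrow> ereal c \<le> Jcost n U V p gh i (stat \<mu>) (stat \<nu>')" by (rule Jcost_ge_of_ecost_ge)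
    thus "\<not> prolonging n U V p (stat \<mu>) (stat \<nu>')"
      using prolonging_infinite_cost[OF \<mu> \<nu>'] fin_\<mu>[OF \<nu>'] by fastforce
  qed
  then obtain Jh where Jh: "\<And>i. i \<in> S \<Longrightarrow> T_I \<mu> Jh i \<le> Jh i" by blast
  have "\<exists>Jl. \<forall>i\<in>S. Jl i \<le> T_II \<nu> Jl i"
  proof (rule T_II_subsolution_exists[OF \<mu> \<nu> np])
    fix \<mu>' assume \<mu>': "\<mu>' \<in> SR n U" and "\<exists>c. \<forall>k. \<forall>i\<in>S. ec (stat \<mu>') (stat \<nu>) k (i, []) \<le> c"
    then obtain c where "\<And>k i. i \<in> S \<Longrightarrow> ec (stat \<mu>') (stat \<nu>) k (i, []) \<le> c" by blast
    hence "\<And>i. i \<in> S \<Longrightarrow> Jcost n U V p gh i (stat \<mu>') (stat \<nu>) \<le> ereal c" by (rule Jcost_le_of_ecost_le)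
    thus "\<not> prolonging n U V p (stat \<mu>') (stat \<nu>)"
      using prolonging_infinite_cost[OF \<mu>' \<nu>] fin_\<nu>[OF \<mu>'] by fastforce
  qed
  then obtain Jl where Jl: "\<And>i. i \<in> S \<Longrightarrow> Jl i \<le> T_II \<nu> Jl i" by blast
  have Jl_sub: "Jl i \<le> T_pair \<mu> \<nu> Jl i" if "i \<in> S" for i
    using Jl[OF that] T_II_le_T_pair[of i \<mu> \<nu> Jl, OF that SR_in_pmfs_on[OF \<mu> that]] by (rule order_trans)
  show ?thesis
  proof (rule iterate_tendsto_fixpoint[of S T_game Jh Jl, OF finite_S])
    show "T_game X i \<le> T_game Y i + d" if "0 \<le> d" "\<And>j. j \<in> S \<Longrightarrow> X j \<le> Y j + d" "i \<in> S" for X Y d i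
      by (rule T_game_le_add[OF that(3,1,2)])
    show "T_game Jh i \<le> Jh i" if "i \<in> S" for i
      using T_game_le_T_I[of i \<mu> Jh, OF that SR_in_pmfs_on[OF \<mu> that]] Jh[OF that] by (rule order_trans)
    show "Jl i \<le> T_game Jl i" if "i \<in> S" for i
      using Jl[OF that] T_II_le_T_game[of i \<nu> Jl, OF that SR_in_pmfs_on[OF \<nu> that]] by (rule order_trans)
    show "Jl i \<le> Jh i" if "i \<in> S" for i
      by (rule subsolution_le_supersolution[OF \<nu> np Jl_sub Jh that])
  qed blast
qed

lemma fixed_point_exists: "\<exists>Q. fixed_point n U V p gh Q"
  using T_game_fixpoint_exists fixed_point_restrict_qfactor by blast

end

theorem corollary3p1:
  fixes n :: nat
    and U :: "nat \<Rightarrow> 'u set" and V :: "nat \<Rightarrow> 'v set"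
    and p :: "nat \<Rightarrow> nat \<Rightarrow> 'u \<Rightarrow> 'v \<Rightarrow> real"
    and gh :: "nat \<Rightarrow> 'u \<Rightarrow> 'v \<Rightarrow> nat \<Rightarrow> real"
  assumes model: "game_model n U V p"
    and assm: "SSP_assumption n U V p gh"
  shows "(\<exists>!Q. fixed_point n U V p gh Q) \<and>
    (\<forall>Q. fixed_point n U V p gh Q \<longrightarrow>
      (\<forall>(i, u, v)\<in>Rset n U V.
         ereal (Q (i, u, v)) = ereal (gexp n p gh i u v) +
           (\<Sum>j\<in>states n. ereal (p i j u v) * Jstar n U V p gh j)) \<and>
      (\<forall>i\<in>states n. Jstar n U V p gh i = ereal (minimaxQ U V Q i)) \<and>
      (\<forall>\<mu> \<nu>.
         (\<forall>i\<in>states n.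
            is_arg_min (\<lambda>\<rho>. SUP \<sigma>\<in>Ubar V i. Qbar U V Q i \<rho> \<sigma>) (\<lambda>\<rho>. \<rho> \<in> Ubar U i) (\<mu> i) \<and>
            is_arg_max (\<lambda>\<sigma>. INF \<rho>\<in>Ubar U i. Qbar U V Q i \<rho> \<sigma>) (\<lambda>\<sigma>. \<sigma> \<in> Ubar V i) (\<nu> i))
         \<longrightarrow> optimal_I n U V p gh (stat \<mu>) \<and> optimal_II n U V p gh (stat \<nu>)))"
proof -
  interpret ssp_assumed n U V p gh
    using model assm by unfold_locales
  show ?thesis
  proof (intro conjI allI impI)
    show "\<exists>!Q. fixed_point n U V p gh Q" using fixed_point_exists fixed_point_unique by blast
  next
    fix Q assume Q: "fixed_point n U V p gh Q"
    show "\<forall>(i, u, v)\<in>Rset n U V. ereal (Q (i, u, v)) = ereal (gexp n p gh i u v) +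
        (\<Sum>j\<in>states n. ereal (p i j u v) * Jstar n U V p gh j)"
      using fixed_point_eq_Jstar[OF Q] by (auto simp: Rset_def)
    show "\<forall>i\<in>states n. Jstar n U V p gh i = ereal (minimaxQ U V Q i)"
      using fixed_point_Jstar_eq_minimaxQ[OF Q] by blast
    fix \<mu> \<nu> assume "\<forall>i\<in>states n.
      is_arg_min (\<lambda>\<rho>. SUP \<sigma>\<in>Ubar V i. Qbar U V Q i \<rho> \<sigma>) (\<lambda>\<rho>. \<rho> \<in> Ubar U i) (\<mu> i) \<and>
      is_arg_max (\<lambda>\<sigma>. INF \<rho>\<in>Ubar U i. Qbar U V Q i \<rho> \<sigma>) (\<lambda>\<sigma>. \<sigma> \<in> Ubar V i) (\<nu> i)"
    from fixed_point_optimal[OF Q this]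
    show "optimal_I n U V p gh (stat \<mu>)" "optimal_II n U V p gh (stat \<nu>)" by blast+
  qed
qed

end
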